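(* (A) Let $t\in\mathcal{S}'(\mathbb{R}^N)$ satisfy $t(q)=O^{\mathrm{dist}}(|q|^\delta)$ for some $\delta\in\mathbb{R}$. Then for every $g\in\mathcal{S}(\mathbb{R}^N)$, $$\int \frac{\mathrm{d}^N q}{(2\pi)^N}\, t(q)\, g_\epsilon(q) = O(\epsilon^\delta)\quad\text{as } \epsilon\searrow 0,$$ where $g_\epsilon(q):=\epsilon^{-N}g(q/\epsilon)$. (B) Let $t\in\mathcal{S}'(\mathbb{R}^N)$ be such that $t(q)=c+O^{\mathrm{dist}}(|q|^\delta)$ (i.e. $t-c=O^{\mathrm{dist}}(|q|^\delta)$) for some $\delta>0$ and $c\in\mathbb{C}$. Then $t$ has the value $t(0)=c$ at zero in the sense of Łojasiewicz. (C) Let $t\in\mathcal{S}'(\mathbb{R}^N)$ satisfy $t(q)=O^{\mathrm{dist}}(|q|^\delta)$, where $\delta\in\mathbb{R}$ and $\omega\in\mathbb{N}_+$ are such that $\delta+1>\omega$. Then $t$ has a zero of order $\omega$ at the origin in the sense of Łojasiewicz.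
   Context: Generalized big-O for distributions: for $t\in\mathcal{S}'(\mathbb{R}^N\times\mathbb{R}^M)$ and $\delta\in\mathbb{R}$ one writes $t(q,q')=O^{\mathrm{dist}}(|q|^\delta)$ ($q\in\mathbb{R}^N$, $q'\in\mathbb{R}^M$) iff there exist a neighborhood $\mathcal{O}$ of the origin in $\mathbb{R}^N\times\mathbb{R}^M$ and continuous functions $t_\alpha\in C(\mathcal{O})$, indexed by multi-indices $\alpha\in\mathbb{N}_0^N$, such that: (1) $t_\alpha\equiv 0$ for all but finitely many $\alpha$; (2) $t_\alpha\equiv0$ whenever $\delta+|\alpha|<0$; (3) $|t_\alpha(q,q')|\le \mathrm{const}\,|q|^{\delta+|\alpha|}$ on $\mathcal{O}$; (4) $t=\sum_\alpha \partial_q^\alpha t_\alpha$ as distributions on $\mathcal{O}$. Here $M=0$ is allowed (then $t(q)=O^{\mathrm{dist}}(|q|^\delta)$ for $t\in\mathcal{S}'(\mathbb{R}^N)$). Value in the sense of Łojasiewicz: $t\in\mathcal{S}'(\mathbb{R}^N)$ has value $t(0)\in\mathbb{C}$ at zero iff $\lim_{\epsilon\searrow0}\int\frac{\mathrm{d}^Nq}{(2\pi)^N}t(q)g_\epsilon(q)$ exists and equals $t(0)$ for every $g\in\mathcal{S}(\mathbb{R}^N)$ with $\int\frac{\mathrm{d}^Nq}{(2\pi)^N}g(q)=1$, where $g_\epsilon(q)=\epsilon^{-N}g(q/\epsilon)$. The distribution $t$ has a zero of order $\omega\in\mathbb{N}_+$ at the origin in the sense of Łojasiewicz iff for every multi-index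 $\gamma$ with $|\gamma|<\omega$ the distribution $\partial_q^\gamma t$ has value $0$ at zero in the sense of Łojasiewicz. *)

theory Defs
  imports "HOL-Analysis.Analysis" "HOL-Library.Landau_Symbols"
begin

text \<open>Functions on R^N are modelled as maps real^'n \<Rightarrow> complex, N = CARD('n).
  Distributions are (linear, continuous) functionals on such functions; the
  pairing T g stands for the paper's integral of t(q) g(q) d^Nq/(2 pi)^N.\<close>

definition partial :: "'n::finite \<Rightarrow> (real^'n \<Rightarrow> complex) \<Rightarrow> real^'n \<Rightarrow> complex" where
  "partial i f = (\<lambda>x. frechet_derivative f (at x) (axis i 1))"

definition dpartial :: "'n::finite list \<Rightarrow> (real^'n \<Rightarrow> complex) \<Rightarrow> real^'n \<Rightarrow> complex" where
  "dpartial is f = foldr partial is f"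

text \<open>Multi-indices alpha :: 'n \<Rightarrow> nat; partial^alpha via a list of directions with the
  right multiplicities (order irrelevant for smooth functions).\<close>
definition mlist :: "('n::finite \<Rightarrow> nat) \<Rightarrow> 'n list" where
  "mlist \<alpha> = (SOME xs. \<forall>i. count_list xs i = \<alpha> i)"

definition mpartial :: "('n::finite \<Rightarrow> nat) \<Rightarrow> (real^'n \<Rightarrow> complex) \<Rightarrow> real^'n \<Rightarrow> complex" where
  "mpartial \<alpha> f = dpartial (mlist \<alpha>) f"

definition mabs :: "('n::finite \<Rightarrow> nat) \<Rightarrow> nat" where
  "mabs \<alpha> = (\<Sum>i\<in>UNIV. \<alpha> i)"

definition smooth_fun :: "(real^'n::finite \<Rightarrow> complex) \<Rightarrow> bool" where
  "smooth_fun f \<longleftrightarrow> (\<forall>is x. dpartial is f differentiable (at x))"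

definition schwartz :: "(real^'n::finite \<Rightarrow> complex) \<Rightarrow> bool" where
  "schwartz f \<longleftrightarrow> smooth_fun f \<and>
     (\<forall>is (k::nat). bounded (range (\<lambda>x. (1 + norm x) ^ k * norm (dpartial is f x))))"

definition schwartz_seminorm :: "nat \<Rightarrow> (real^'n::finite \<Rightarrow> complex) \<Rightarrow> real" where
  "schwartz_seminorm m f = Sup ((\<lambda>(x, is, k). (1 + norm x) ^ k * norm (dpartial is f x))
       ` {(x, is, k). length is \<le> m \<and> k \<le> m})"

definition tempered :: "((real^'n::finite \<Rightarrow> complex) \<Rightarrow> complex) \<Rightarrow> bool" where
  "tempered T \<longleftrightarrow>
     (\<forall>f g. schwartz f \<and> schwartz g \<longrightarrow> T (\<lambda>x. f x + g x) = T f + T g) \<and>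
     (\<forall>f (a::complex). schwartz f \<longrightarrow> T (\<lambda>x. a * f x) = a * T f) \<and>
     (\<exists>C m. \<forall>f. schwartz f \<longrightarrow> norm (T f) \<le> C * schwartz_seminorm m f)"

definition normc :: "'n::finite itself \<Rightarrow> complex" where
  "normc _ = complex_of_real (inverse ((2 * pi) ^ CARD('n)))"

definition fun_dist :: "(real^'n::finite \<Rightarrow> complex) \<Rightarrow> (real^'n \<Rightarrow> complex) \<Rightarrow> complex" where
  "fun_dist f \<phi> = normc TYPE('n) * (LINT q|lborel. f q * \<phi> q)"

definition tsupport :: "(real^'n::finite \<Rightarrow> complex) \<Rightarrow> (real^'n) set" where
  "tsupport \<phi> = closure {x. \<phi> x \<noteq> 0}"

definition dist_deriv :: "('n::finite \<Rightarrow> nat) \<Rightarrow> ((real^'n \<Rightarrow> complex) \<Rightarrow> complex)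
     \<Rightarrow> (real^'n \<Rightarrow> complex) \<Rightarrow> complex" where
  "dist_deriv \<gamma> T \<phi> = (-1) ^ mabs \<gamma> * T (mpartial \<gamma> \<phi>)"

text \<open>Generalized big-O (case M = 0). The bound (3) is required for q \<noteq> 0 only,
  which is exactly the meaning of |q|^(delta+|alpha|) with the usual conventions at q = 0
  (continuity handles q = 0).\<close>
definition Odist :: "((real^'n::finite \<Rightarrow> complex) \<Rightarrow> complex) \<Rightarrow> real \<Rightarrow> bool" where
  "Odist T \<delta> \<longleftrightarrow> (\<exists>U (ta :: ('n \<Rightarrow> nat) \<Rightarrow> real^'n \<Rightarrow> complex).
     open U \<and> 0 \<in> U \<and>
     (\<forall>\<alpha>. continuous_on U (ta \<alpha>)) \<and>
     finite {\<alpha>. \<exists>q\<in>U. ta \<alpha> q \<noteq> 0} \<and>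
     (\<forall>\<alpha>. \<delta> + real (mabs \<alpha>) < 0 \<longrightarrow> (\<forall>q\<in>U. ta \<alpha> q = 0)) \<and>
     (\<forall>\<alpha>. \<exists>C. \<forall>q\<in>U. q \<noteq> 0 \<longrightarrow> norm (ta \<alpha> q) \<le> C * norm q powr (\<delta> + real (mabs \<alpha>))) \<and>
     (\<forall>\<phi>. smooth_fun \<phi> \<and> compact (tsupport \<phi>) \<and> tsupport \<phi> \<subseteq> U \<longrightarrow>
        T \<phi> = (\<Sum>\<alpha>\<in>{\<alpha>. \<exists>q\<in>U. ta \<alpha> q \<noteq> 0}.
                    (-1) ^ mabs \<alpha> * fun_dist (ta \<alpha>) (mpartial \<alpha> \<phi>))))"

definition rescale :: "real \<Rightarrow> (real^'n::finite \<Rightarrow> complex) \<Rightarrow> real^'n \<Rightarrow> complex" where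
  "rescale \<epsilon> g = (\<lambda>q. complex_of_real (inverse \<epsilon> ^ CARD('n)) * g (inverse \<epsilon> *\<^sub>R q))"

definition has_value_at_zero :: "((real^'n::finite \<Rightarrow> complex) \<Rightarrow> complex) \<Rightarrow> complex \<Rightarrow> bool" where
  "has_value_at_zero T v \<longleftrightarrow>
     (\<forall>g. schwartz g \<and> fun_dist (\<lambda>_. 1) g = 1 \<longrightarrow>
        ((\<lambda>\<epsilon>. T (rescale \<epsilon> g)) \<longlongrightarrow> v) (at_right 0))"

definition zero_of_order :: "((real^'n::finite \<Rightarrow> complex) \<Rightarrow> complex) \<Rightarrow> nat \<Rightarrow> bool" where
  "zero_of_order T \<omega> \<longleftrightarrow> (\<forall>\<gamma>. mabs \<gamma> < \<omega> \<longrightarrow> has_value_at_zero (dist_deriv \<gamma> T) 0)"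

end

theory Submission
  imports Defs "HOL-Probability.Sinc_Integral" "HOL-Computational_Algebra.Polynomial"
begin

(* Choose a cutoff chi, equal to 1 near the origin and supported in the neighbourhood where
   t = sum_alpha d^alpha t_alpha. On chi g_eps the representation gives a finite sum of integrals
   of t_alpha against d^alpha (chi g_eps); substituting q = eps y, the bound
   |t_alpha q| <= C |q|^(delta + |alpha|) absorbs the factor eps^(-|alpha|) produced by the
   derivatives and leaves eps^delta. On (1 - chi) g_eps every Schwartz seminorm is O(eps^n) for
   all n, since g decays rapidly and the support stays away from 0; temperedness turns this into
   a bound on T. Part (B) applies this to t - c. For part (C), d^gamma t applied to g_eps equals
   +- eps^(-|gamma|) t((d^gamma g)_eps), which is O(eps^(delta - |gamma|)) with delta > |gamma|. *)

section \<open>Iterated partial derivatives\<close>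

lemma frechet_derivative_cong_open:
  assumes "open S" "x \<in> S" "\<And>y. y \<in> S \<Longrightarrow> f y = g y"
  shows "frechet_derivative f (at x) = frechet_derivative g (at x)"
proof -
  have "(f has_derivative D) (at x) \<longleftrightarrow> (g has_derivative D) (at x)" for D
    using has_derivative_transform_within_open[of f D x UNIV S g]
      has_derivative_transform_within_open[of g D x UNIV S f] assms by auto
  thus ?thesis unfolding frechet_derivative_def by simp
qed

lemma partial_eq_if_has_derivative:
  "(f has_derivative D) (at x) \<Longrightarrow> partial i f x = D (axis i 1)"
  unfolding partial_def using frechet_derivative_at by metis

lemma dpartial_Nil [simp]: "dpartial [] f = f"
  by (simp add: dpartial_def)

lemma dpartial_Cons [simp]: "dpartial (i # is) f = partial i (dpartial is f)"
  by (simp add: dpartial_def)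

lemma dpartial_append: "dpartial (is @ js) f = dpartial is (dpartial js f)"
  by (simp add: dpartial_def)

lemma dpartial_cong_open:
  assumes "open S" "\<And>y. y \<in> S \<Longrightarrow> f y = g y" "x \<in> S"
  shows "dpartial is f x = dpartial is g x"
  using assms(3)
proof (induction "is" arbitrary: x)
  case Nil
  thus ?case using assms by simp
next
  case (Cons i "is")
  have "frechet_derivative (dpartial is f) (at x) = frechet_derivative (dpartial is g) (at x)"
    by (rule frechet_derivative_cong_open[OF assms(1) Cons.prems]) (use Cons.IH in auto)
  thus ?case by (simp add: partial_def)
qed

lemma smooth_fun_dpartial: "smooth_fun f \<Longrightarrow> smooth_fun (dpartial is f)"
  by (simp add: smooth_fun_def dpartial_append[symmetric])

lemma smooth_fun_differentiable_dpartial: "smooth_fun f \<Longrightarrow> dpartial is f differentiable (at x)"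
  using smooth_fun_def[of f] by metis

lemma smooth_fun_continuous_on_dpartial: "smooth_fun f \<Longrightarrow> continuous_on S (dpartial is f)"
  by (meson continuous_at_imp_continuous_on differentiable_imp_continuous_within
      smooth_fun_differentiable_dpartial)

lemma has_derivative_sum_list:
  "(\<And>c. c \<in> set cs \<Longrightarrow> (F c has_derivative D c) (at x)) \<Longrightarrow>
   ((\<lambda>y. \<Sum>c\<leftarrow>cs. F c y) has_derivative (\<lambda>h. \<Sum>c\<leftarrow>cs. D c h)) (at x)"
  by (induction cs) (auto intro!: has_derivative_add)

lemma differentiable_sum_list:
  "(\<And>c. c \<in> set cs \<Longrightarrow> F c differentiable (at x)) \<Longrightarrow>
   (\<lambda>y. \<Sum>c\<leftarrow>cs. F c y) differentiable (at x)"
  using has_derivative_sum_list[of cs F "\<lambda>c. frechet_derivative (F c) (at x)" x]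
    frechet_derivative_works
  unfolding differentiable_def by blast

lemma partial_sum_list:
  assumes "\<And>c. c \<in> set cs \<Longrightarrow> F c differentiable (at x)"
  shows "partial i (\<lambda>y. \<Sum>c\<leftarrow>cs. F c y) x = (\<Sum>c\<leftarrow>cs. partial i (F c) x)"
proof -
  have "((\<lambda>y. \<Sum>c\<leftarrow>cs. F c y) has_derivative
      (\<lambda>h. \<Sum>c\<leftarrow>cs. frechet_derivative (F c) (at x) h)) (at x)"
    by (rule has_derivative_sum_list) (use assms frechet_derivative_works in blast)
  from partial_eq_if_has_derivative[OF this] show ?thesis
    by (simp add: partial_def)
qed

lemma partial_add:
  assumes "f differentiable (at x)" "g differentiable (at x)"
  shows "partial i (\<lambda>y. f y + g y) x = partial i f x + partial i g x"
  using partial_sum_list[of "[f, g]" "\<lambda>h. h" x i] assms by auto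

lemma partial_mult:
  assumes "f differentiable (at x)" "g differentiable (at x)"
  shows "partial i (\<lambda>y. f y * g y) x = f x * partial i g x + partial i f x * g x"
proof -
  have "((\<lambda>y. f y * g y) has_derivative (\<lambda>h. f x * frechet_derivative g (at x) h
      + frechet_derivative f (at x) h * g x)) (at x)"
    using assms by (intro has_derivative_mult) (auto simp: frechet_derivative_works)
  from partial_eq_if_has_derivative[OF this] show ?thesis
    by (simp add: partial_def)
qed

lemma partial_const: "partial i (\<lambda>y. c) x = 0"
proof -
  have "((\<lambda>y. c) has_derivative (\<lambda>h. 0)) (at x)" by simp
  from partial_eq_if_has_derivative[OF this] show ?thesis by simp
qed

lemma partial_cmult:
  assumes "f differentiable (at x)"
  shows "partial i (\<lambda>y. c * f y) x = c * partial i f x"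
  using partial_mult[of "\<lambda>_. c" x f i] assms by (simp add: partial_const)

lemma partial_of_real:
  assumes "(F has_derivative DF) (at x)"
  shows "partial i (\<lambda>x. complex_of_real (F x)) x = of_real (DF (axis i 1))"
  using partial_eq_if_has_derivative[OF has_derivative_of_real[OF assms]] by simp

lemma dpartial_const: "dpartial is (\<lambda>y. c) = (if is = [] then (\<lambda>y. c) else (\<lambda>y. 0))"
  by (induction "is") (auto simp: partial_const)

lemma dpartial_eq_0_open:
  assumes "open S" "\<And>y. y \<in> S \<Longrightarrow> f y = 0" "x \<in> S"
  shows "dpartial is f x = 0"
  using dpartial_cong_open[OF assms(1), of f "\<lambda>_. 0" x "is"] assms by (simp add: dpartial_const)

lemma smooth_fun_const: "smooth_fun (\<lambda>y. c)"
  unfolding smooth_fun_def by (simp add: dpartial_const)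

lemma dpartial_add:
  assumes "smooth_fun f" "smooth_fun g"
  shows "dpartial is (\<lambda>y. f y + g y) = (\<lambda>y. dpartial is f y + dpartial is g y)"
proof (induction "is")
  case (Cons i "is")
  show ?case
    using assms by (simp only: dpartial_Cons Cons.IH)
      (auto simp: fun_eq_iff intro!: partial_add smooth_fun_differentiable_dpartial)
qed simp

lemma dpartial_cmult:
  assumes "smooth_fun f"
  shows "dpartial is (\<lambda>y. c * f y) = (\<lambda>y. c * dpartial is f y)"
proof (induction "is")
  case (Cons i "is")
  show ?case
    using assms by (simp only: dpartial_Cons Cons.IH)
      (auto simp: fun_eq_iff intro!: partial_cmult smooth_fun_differentiable_dpartial)
qed simp

lemma smooth_fun_add: "smooth_fun f \<Longrightarrow> smooth_fun g \<Longrightarrow> smooth_fun (\<lambda>y. f y + g y)"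
  unfolding smooth_fun_def[of "\<lambda>y. f y + g y"] dpartial_add
  by (auto intro!: differentiable_add smooth_fun_differentiable_dpartial)

lemma smooth_fun_cmult: "smooth_fun f \<Longrightarrow> smooth_fun (\<lambda>y. c * f y)"
  unfolding smooth_fun_def[of "\<lambda>y. c * f y"] dpartial_cmult
  by (auto intro!: differentiable_mult smooth_fun_differentiable_dpartial)

lemma smooth_fun_diff: "smooth_fun f \<Longrightarrow> smooth_fun g \<Longrightarrow> smooth_fun (\<lambda>y. f y - g y)"
  using smooth_fun_add[of f "\<lambda>y. (-1) * g y"] smooth_fun_cmult[of g "-1"] by simp

lemma dpartial_diff:
  assumes "smooth_fun f" "smooth_fun g"
  shows "dpartial is (\<lambda>y. f y - g y) = (\<lambda>y. dpartial is f y - dpartial is g y)"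
  using dpartial_add[OF assms(1) smooth_fun_cmult[OF assms(2), of "-1"]]
    dpartial_cmult[OF assms(2), where c="-1"]
  by simp

lemma norm_dpartial_one_minus_le:
  assumes "smooth_fun f"
  shows "norm (dpartial is (\<lambda>x. 1 - f x) x) \<le> 1 + norm (dpartial is f x)"
proof -
  have "norm (dpartial is (\<lambda>x. 1 - f x) x) = norm (dpartial is (\<lambda>_. 1) x - dpartial is f x)"
    unfolding dpartial_diff[OF smooth_fun_const assms] ..
  also have "\<dots> \<le> 1 + norm (dpartial is f x)"
    by (intro order_trans[OF norm_triangle_ineq4]) (simp add: dpartial_const)
  finally show ?thesis .
qed

text \<open>The Leibniz rule: \<open>splits is\<close> lists the ways of distributing the derivatives
  \<open>is\<close> between the two factors.\<close>

fun splits :: "'a list \<Rightarrow> ('a list \<times> 'a list) list" where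
  "splits [] = [([], [])]"
| "splits (i # is) = map (\<lambda>p. (i # fst p, snd p)) (splits is) @ map (\<lambda>p. (fst p, i # snd p)) (splits is)"

lemma length_snd_splits_le: "p \<in> set (splits is) \<Longrightarrow> length (snd p) \<le> length is"
  by (induction "is" arbitrary: p) force+

lemma dpartial_mult:
  assumes f: "smooth_fun f" and g: "smooth_fun g"
  shows "dpartial is (\<lambda>y. f y * g y) =
    (\<lambda>y. \<Sum>p\<leftarrow>splits is. dpartial (fst p) f y * dpartial (snd p) g y)"
proof (induction "is")
  case Nil
  thus ?case by simp
next
  case (Cons i "is")
  show ?case
  proof
    fix x
    have "dpartial (i # is) (\<lambda>y. f y * g y) x =
      (\<Sum>p\<leftarrow>splits is. partial i (\<lambda>y. dpartial (fst p) f y * dpartial (snd p) g y) x)"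
      using Cons.IH f g
      by (simp, intro partial_sum_list differentiable_mult smooth_fun_differentiable_dpartial)
    also have "\<dots> = (\<Sum>p\<leftarrow>splits is. dpartial (fst p) f x * dpartial (i # snd p) g x
                                     + dpartial (i # fst p) f x * dpartial (snd p) g x)"
      using f g by (auto intro!: arg_cong[where f=sum_list] partial_mult smooth_fun_differentiable_dpartial)
    also have "\<dots> = (\<Sum>p\<leftarrow>splits (i # is). dpartial (fst p) f x * dpartial (snd p) g x)"
      by (simp add: sum_list_addf o_def add.commute)
    finally show "dpartial (i # is) (\<lambda>y. f y * g y) x =
        (\<Sum>p\<leftarrow>splits (i # is). dpartial (fst p) f x * dpartial (snd p) g x)" .
  qed
qed

lemma smooth_fun_mult: "smooth_fun f \<Longrightarrow> smooth_fun g \<Longrightarrow> smooth_fun (\<lambda>y. f y * g y)"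
  unfolding smooth_fun_def[of "\<lambda>y. f y * g y"] dpartial_mult
  by (auto intro!: differentiable_sum_list differentiable_mult smooth_fun_differentiable_dpartial)

lemma norm_sum_list_le: "norm (\<Sum>c\<leftarrow>cs. F c) \<le> (\<Sum>c\<leftarrow>cs. norm (F c :: 'b::real_normed_vector))"
  by (induction cs) (auto intro: order_trans[OF norm_triangle_ineq])

lemma norm_dpartial_mult_le:
  assumes "smooth_fun h" "smooth_fun f" and Kh: "\<And>js y. norm (dpartial js h y) \<le> Kh js"
  shows "norm (dpartial is (\<lambda>y. h y * f y) x) \<le>
    (\<Sum>p\<leftarrow>splits is. Kh (fst p) * norm (dpartial (snd p) f x))"
proof -
  have "norm (dpartial is (\<lambda>y. h y * f y) x) \<le>
      (\<Sum>p\<leftarrow>splits is. norm (dpartial (fst p) h x * dpartial (snd p) f x))"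
    unfolding dpartial_mult[OF assms(1,2)] by (rule norm_sum_list_le)
  also have "\<dots> \<le> (\<Sum>p\<leftarrow>splits is. Kh (fst p) * norm (dpartial (snd p) f x))"
    by (intro sum_list_mono) (simp add: norm_mult Kh mult_right_mono)
  finally show ?thesis .
qed

lemma dpartial_comp_scaleR:
  assumes g: "smooth_fun g"
  shows "dpartial is (\<lambda>q. g (s *\<^sub>R q)) = (\<lambda>q. of_real s ^ length is * dpartial is g (s *\<^sub>R q))"
proof (induction "is")
  case Nil
  thus ?case by simp
next
  case (Cons i "is")
  show ?case
  proof
    fix x
    define D where "D = frechet_derivative (dpartial is g) (at (s *\<^sub>R x))"
    have hD: "(dpartial is g has_derivative D) (at (s *\<^sub>R x))"
      unfolding D_def using g frechet_derivative_works smooth_fun_differentiable_dpartial by blast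
    have "((\<lambda>q. of_real s ^ length is * dpartial is g (s *\<^sub>R q)) has_derivative
           (\<lambda>h. of_real s ^ length is * D (s *\<^sub>R h))) (at x)"
      by (intro has_derivative_mult_right has_derivative_compose[where f="\<lambda>q. s *\<^sub>R q", OF _ hD]
           has_derivative_scaleR_right has_derivative_ident)
    from partial_eq_if_has_derivative[OF this, of i]
    have "partial i (\<lambda>q. of_real s ^ length is * dpartial is g (s *\<^sub>R q)) x
       = of_real s ^ length is * D (s *\<^sub>R axis i 1)" .
    also have "D (s *\<^sub>R axis i 1) = s *\<^sub>R D (axis i 1)"
      using has_derivative_linear[OF hD] linear_scale by blast
    also have "D (axis i 1) = partial i (dpartial is g) (s *\<^sub>R x)"
      using partial_eq_if_has_derivative[OF hD] by simp
    finally show "dpartial (i # is) (\<lambda>q. g (s *\<^sub>R q)) x =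
        of_real s ^ length (i # is) * dpartial (i # is) g (s *\<^sub>R x)"
      using Cons.IH by (simp add: scaleR_conv_of_real mult_ac)
  qed
qed

lemma smooth_fun_comp_scaleR:
  assumes "smooth_fun g"
  shows "smooth_fun (\<lambda>q. g (s *\<^sub>R q))"
proof -
  have "(\<lambda>q. dpartial is g (s *\<^sub>R q)) differentiable (at x)" for "is" x
    using differentiable_chain_at[of "\<lambda>q. s *\<^sub>R q" x "dpartial is g"]
      smooth_fun_differentiable_dpartial[OF assms] by (simp add: o_def)
  then show ?thesis
    unfolding smooth_fun_def dpartial_comp_scaleR[OF assms]
    by (auto intro!: differentiable_mult)
qed

lemma smooth_fun_rescale: "smooth_fun g \<Longrightarrow> smooth_fun (rescale \<epsilon> g)"
  unfolding rescale_def by (intro smooth_fun_cmult smooth_fun_comp_scaleR)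

lemma dpartial_rescale:
  assumes "smooth_fun g"
  shows "dpartial is (rescale \<epsilon> g) =
    (\<lambda>q. of_real (inverse \<epsilon>) ^ length is * rescale \<epsilon> (dpartial is g) q)"
  unfolding rescale_def dpartial_cmult[OF smooth_fun_comp_scaleR[OF assms]]
    dpartial_comp_scaleR[OF assms]
  by (simp add: mult_ac)

lemma norm_dpartial_rescale:
  fixes x :: "real^'n::finite"
  assumes "smooth_fun g" "0 < \<epsilon>"
  shows "norm (dpartial is (rescale \<epsilon> g) x) =
    inverse \<epsilon> ^ (length is + CARD('n)) * norm (dpartial is g (inverse \<epsilon> *\<^sub>R x))"
  unfolding dpartial_rescale[OF assms(1)]
  using assms(2) by (simp add: rescale_def norm_mult norm_power norm_inverse power_add)

section \<open>A smooth bump function\<close>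

text \<open>\<open>flat_deriv k\<close> is the \<open>k\<close>-th derivative of the function that is \<open>exp (-1/t)\<close> for
  \<open>t > 0\<close> and \<open>0\<close> otherwise; for \<open>t > 0\<close> it is \<open>P\<^sub>k(1/t) exp (-1/t)\<close> with \<open>P\<^sub>k = flat_poly k\<close>.\<close>

fun flat_poly :: "nat \<Rightarrow> real poly" where
  "flat_poly 0 = 1"
| "flat_poly (Suc k) = [:0, 0, 1:] * (flat_poly k - pderiv (flat_poly k))"

definition flat_deriv :: "nat \<Rightarrow> real \<Rightarrow> real" where
  "flat_deriv k t = (if 0 < t then poly (flat_poly k) (inverse t) * exp (- inverse t) else 0)"

lemma poly_times_exp_minus_tendsto_0: "((\<lambda>u::real. poly Q u * exp (- u)) \<longlongrightarrow> 0) at_top"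
proof -
  have "((\<lambda>u. \<Sum>i\<le>degree Q. coeff Q i * (u ^ i / exp u)) \<longlongrightarrow> (\<Sum>i\<le>degree Q. coeff Q i * 0)) at_top"
    by (intro tendsto_sum tendsto_mult tendsto_const tendsto_power_div_exp_0)
  moreover have "poly Q u * exp (- u) = (\<Sum>i\<le>degree Q. coeff Q i * (u ^ i / exp u))" for u
    by (simp add: poly_altdef sum_distrib_left exp_minus divide_inverse mult_ac)
  ultimately show ?thesis by simp
qed

lemma flat_deriv_has_real_derivative_0: "(flat_deriv k has_real_derivative 0) (at 0)"
proof -
  have "((\<lambda>y. (flat_deriv k y - flat_deriv k 0) / (y - 0)) \<longlongrightarrow> 0) (at 0)"
  proof (rule filterlim_split_at)
    have "\<forall>\<^sub>F y in at_left 0. 0 = (flat_deriv k y - flat_deriv k 0) / (y - 0)"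
      by (simp add: eventually_at_left_field flat_deriv_def) (auto intro: exI[of _ "-1"])
    then show "((\<lambda>y. (flat_deriv k y - flat_deriv k 0) / (y - 0)) \<longlongrightarrow> 0) (at_left 0)"
      by (rule Lim_transform_eventually[OF tendsto_const])
    have "((\<lambda>y. poly ([:0, 1:] * flat_poly k) (inverse y) * exp (- inverse y)) \<longlongrightarrow> 0) (at_right 0)"
      by (rule filterlim_compose[OF poly_times_exp_minus_tendsto_0 filterlim_inverse_at_top_right])
    moreover have "\<forall>\<^sub>F y in at_right 0. poly ([:0, 1:] * flat_poly k) (inverse y) * exp (- inverse y)
        = (flat_deriv k y - flat_deriv k 0) / (y - 0)"
      by (simp add: eventually_at_right_field flat_deriv_def)
         (auto intro!: exI[of _ 1] simp: divide_inverse mult_ac)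
    ultimately show "((\<lambda>y. (flat_deriv k y - flat_deriv k 0) / (y - 0)) \<longlongrightarrow> 0) (at_right 0)"
      by (rule Lim_transform_eventually)
  qed
  then show ?thesis by (simp add: has_field_derivative_iff)
qed

lemma flat_deriv_has_real_derivative: "(flat_deriv k has_real_derivative flat_deriv (Suc k) t) (at t)"
proof (cases t "0::real" rule: linorder_cases)
  case less
  have "((\<lambda>t. 0) has_real_derivative 0) (at t)" by simp
  then have "(flat_deriv k has_real_derivative 0) (at t)"
    by (rule has_field_derivative_transform_within_open[of _ _ _ "{..<0}"])
       (use less in \<open>auto simp: flat_deriv_def\<close>)
  with less show ?thesis by (simp add: flat_deriv_def)
next
  case equal
  then show ?thesis using flat_deriv_has_real_derivative_0 by (simp add: flat_deriv_def)
next
  case greater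
  let ?P = "flat_poly k"
  have "((\<lambda>t. poly ?P (inverse t) * exp (- inverse t)) has_real_derivative
      (poly (pderiv ?P) (inverse t) * (- (inverse t * inverse t)) * exp (- inverse t)
        + poly ?P (inverse t) * (exp (- inverse t) * (inverse t * inverse t)))) (at t)"
    using greater by (auto intro!: derivative_eq_intros)
  also have "poly (pderiv ?P) (inverse t) * (- (inverse t * inverse t)) * exp (- inverse t)
        + poly ?P (inverse t) * (exp (- inverse t) * (inverse t * inverse t)) = flat_deriv (Suc k) t"
    using greater by (simp add: flat_deriv_def algebra_simps)
  finally show ?thesis
    by (rule has_field_derivative_transform_within_open[of _ _ _ "{0<..}"])
       (use greater in \<open>auto simp: flat_deriv_def\<close>)
qed

lemma has_derivative_flat_deriv_quadratic:
  "((\<lambda>x::real^'n::finite. flat_deriv k (a + b * (x \<bullet> x))) has_derivative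
     (\<lambda>h. flat_deriv (Suc k) (a + b * (x \<bullet> x)) * (b * (x \<bullet> h + h \<bullet> x)))) (at x)"
proof -
  have "((\<lambda>x::real^'n. a + b * (x \<bullet> x)) has_derivative (\<lambda>h. b * (x \<bullet> h + h \<bullet> x))) (at x)"
    by (auto intro!: derivative_eq_intros)
  moreover have "(flat_deriv k has_derivative (*) (flat_deriv (Suc k) (a + b * (x \<bullet> x))))
      (at (a + b * (x \<bullet> x)))"
    using flat_deriv_has_real_derivative has_field_derivative_imp_has_derivative by blast
  ultimately show ?thesis using has_derivative_compose by fastforce
qed

lemma flat_deriv_0_pos: "0 < t \<Longrightarrow> 0 < flat_deriv 0 t"
  by (simp add: flat_deriv_def)

lemma flat_deriv_0_eq_0: "t \<le> 0 \<Longrightarrow> flat_deriv 0 t = 0"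
  by (simp add: flat_deriv_def)

lemma bump_denominator_pos:
  "A < B \<Longrightarrow> 0 < flat_deriv 0 (B + (-1) * s) + flat_deriv 0 ((-A) + 1 * s)"
  by (cases "s < B") (auto simp: flat_deriv_def add_pos_nonneg)

text \<open>With \<open>f = flat_deriv 0\<close>, the bump \<open>f(B - |x|\<^sup>2) / (f(B - |x|\<^sup>2) + f(|x|\<^sup>2 - A))\<close> lies in
  the following algebra, which is closed under partial derivatives; this is how smoothness is proved.\<close>

inductive bump_algebra :: "real \<Rightarrow> real \<Rightarrow> (real^'n::finite \<Rightarrow> complex) \<Rightarrow> bool" for A B where
  flat: "bump_algebra A B (\<lambda>x. of_real (flat_deriv k (a + b * (x \<bullet> x))))"
| coord: "bump_algebra A B (\<lambda>x. of_real (x $ i))"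
| const: "bump_algebra A B (\<lambda>x. c)"
| inverse_denominator: "bump_algebra A B (\<lambda>x. of_real (inverse
      (flat_deriv 0 (B + (-1) * (x \<bullet> x)) + flat_deriv 0 ((-A) + 1 * (x \<bullet> x)))))"
| add: "bump_algebra A B f \<Longrightarrow> bump_algebra A B g \<Longrightarrow> bump_algebra A B (\<lambda>x. f x + g x)"
| mult: "bump_algebra A B f \<Longrightarrow> bump_algebra A B g \<Longrightarrow> bump_algebra A B (\<lambda>x. f x * g x)"

lemma axis_inner_sym: "(x::real^'n::finite) \<bullet> axis i 1 + axis i 1 \<bullet> x = 2 * x $ i"
  by (simp add: inner_axis inner_axis')

lemma bump_algebra_partial_inverse_denominator:
  fixes A B :: real
  defines "den \<equiv> \<lambda>x::real^'n::finite. flat_deriv 0 (B + (-1) * (x \<bullet> x)) + flat_deriv 0 ((-A) + 1 * (x \<bullet> x))"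
  assumes AB: "A < B"
  shows "(\<forall>x. (\<lambda>x. complex_of_real (inverse (den x))) differentiable (at x)) \<and>
    (\<forall>i. bump_algebra A B (partial i (\<lambda>x. complex_of_real (inverse (den x)))))"
proof -
  define Dd where "Dd = (\<lambda>x h::real^'n. flat_deriv (Suc 0) (B + (-1) * (x \<bullet> x)) * ((-1) * (x \<bullet> h + h \<bullet> x))
                  + flat_deriv (Suc 0) ((-A) + 1 * (x \<bullet> x)) * (1 * (x \<bullet> h + h \<bullet> x)))"
  have "(den has_derivative Dd x) (at x)" for x
    unfolding den_def Dd_def by (intro has_derivative_add has_derivative_flat_deriv_quadratic)
  moreover have "den x \<noteq> 0" for x
    using bump_denominator_pos[OF AB] unfolding den_def by (metis less_irrefl)
  ultimately have hw: "((\<lambda>x. inverse (den x)) has_derivative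
      (\<lambda>h. - (inverse (den x) * Dd x h * inverse (den x)))) (at x)" for x
    by (intro Deriv.has_derivative_inverse)
  have eq: "partial i (\<lambda>x. complex_of_real (inverse (den x))) =
     (\<lambda>x. (\<lambda>x. of_real (-1)) x * ((\<lambda>x. complex_of_real (inverse (den x))) x * (\<lambda>x. complex_of_real (inverse (den x))) x)
       * ((\<lambda>x. of_real (flat_deriv (Suc 0) (B + (-1) * (x \<bullet> x)))) x * ((\<lambda>x. of_real (-2)) x * of_real (x $ i))
        + (\<lambda>x. of_real (flat_deriv (Suc 0) ((-A) + 1 * (x \<bullet> x)))) x * ((\<lambda>x. of_real 2) x * of_real (x $ i))))" for i
    by (rule ext, subst partial_of_real[OF hw]) (simp add: Dd_def inner_axis inner_axis' algebra_simps)
  have inv: "bump_algebra A B (\<lambda>x. complex_of_real (inverse (den x)))"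
    unfolding den_def by (rule bump_algebra.inverse_denominator)
  have "\<forall>i. bump_algebra A B (partial i (\<lambda>x. complex_of_real (inverse (den x))))"
    unfolding eq by (intro allI, (rule inv bump_algebra.intros)+)
  moreover have "\<forall>x. (\<lambda>x. complex_of_real (inverse (den x))) differentiable (at x)"
    unfolding differentiable_def by (intro allI exI, rule has_derivative_of_real[OF hw])
  ultimately show ?thesis by blast
qed

lemma bump_algebra_partial_closed:
  assumes AB: "A < B" and "bump_algebra A B f"
  shows "(\<forall>x. f differentiable (at x)) \<and> (\<forall>i. bump_algebra A B (partial i f))"
  using assms(2)
proof induction
  case (flat k a b)
  have "partial i (\<lambda>x::real^'a. complex_of_real (flat_deriv k (a + b * (x \<bullet> x)))) =
      (\<lambda>x. of_real (flat_deriv (Suc k) (a + b * (x \<bullet> x))) * ((\<lambda>x. of_real (2 * b)) x * of_real (x $ i)))" for i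
    by (rule ext, subst partial_of_real[OF has_derivative_flat_deriv_quadratic]) (simp add: axis_inner_sym)
  moreover have "(\<lambda>x::real^'a. complex_of_real (flat_deriv k (a + b * (x \<bullet> x)))) differentiable (at x)" for x
    unfolding differentiable_def by (rule exI, rule has_derivative_of_real[OF has_derivative_flat_deriv_quadratic])
  ultimately show ?case by (auto intro!: bump_algebra.intros)
next
  case (coord j)
  have "((\<lambda>x::real^'a. x $ j) has_derivative (\<lambda>h. h $ j)) (at x)" for x
    by (rule bounded_linear_imp_has_derivative) (simp add: bounded_linear_vec_nth)
  note d = has_derivative_of_real[OF this]
  have "partial i (\<lambda>x::real^'a. complex_of_real (x $ j)) = (\<lambda>x. of_real (axis i 1 $ j))" for i
    by (rule ext, rule partial_eq_if_has_derivative[OF d])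
  with d show ?case unfolding differentiable_def by (auto intro!: bump_algebra.intros)
next
  case (const c)
  show ?case by (auto simp: partial_const intro: bump_algebra.const)
next
  case inverse_denominator
  then show ?case by (rule bump_algebra_partial_inverse_denominator[OF AB])
next
  case (add f g)
  have "partial i (\<lambda>x. f x + g x) = (\<lambda>x. partial i f x + partial i g x)" for i
    using add by (auto simp: fun_eq_iff intro!: partial_add)
  with add show ?case by (auto intro!: bump_algebra.intros differentiable_add)
next
  case (mult f g)
  have "partial i (\<lambda>x. f x * g x) = (\<lambda>x. f x * partial i g x + partial i f x * g x)" for i
    using mult by (auto simp: fun_eq_iff intro!: partial_mult)
  with mult show ?case by (auto intro!: bump_algebra.intros differentiable_mult)
qed

lemma bump_algebra_smooth:
  assumes AB: "A < B" and f: "bump_algebra A B f"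
  shows "smooth_fun f"
proof -
  have "bump_algebra A B (dpartial is f)" for "is"
    by (induction "is") (use f bump_algebra_partial_closed[OF AB] in auto)
  then show ?thesis unfolding smooth_fun_def using bump_algebra_partial_closed[OF AB] by blast
qed

lemma bounded_dpartial_if_bounded_support:
  assumes f: "smooth_fun f" and z: "\<And>x. R < norm x \<Longrightarrow> f x = 0"
  shows "\<exists>K. \<forall>x. norm (dpartial is f x) \<le> K"
proof -
  have "compact (dpartial is f ` cball 0 R)"
    by (rule compact_continuous_image[OF smooth_fun_continuous_on_dpartial[OF f]]) simp
  then obtain a where a: "\<And>x. x \<in> cball 0 R \<Longrightarrow> norm (dpartial is f x) \<le> a"
    using compact_imp_bounded bounded_iff by (metis image_eqI)
  have o: "open {x::real^'a. R < norm x}" by (intro open_Collect_less continuous_intros)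
  have "norm (dpartial is f x) \<le> max a 0" for x
  proof (cases "norm x \<le> R")
    case True
    thus ?thesis using a[of x] by auto
  next
    case False
    then have "dpartial is f x = 0" by (intro dpartial_eq_0_open[OF o]) (auto intro: z)
    thus ?thesis by simp
  qed
  thus ?thesis by blast
qed

lemma smooth_bump_exists:
  assumes r: "0 < r1" "r1 < r2"
  obtains cf :: "real^'n::finite \<Rightarrow> complex" and K where "smooth_fun cf"
    "\<And>x. norm x < r1 \<Longrightarrow> cf x = 1" "\<And>x. r2 \<le> norm x \<Longrightarrow> cf x = 0"
    "\<And>is x. norm (dpartial is cf x) \<le> K is"
proof -
  define A where "A = r1\<^sup>2"
  define B where "B = r2\<^sup>2"
  have AB: "A < B" unfolding A_def B_def using r by (simp add: power_strict_mono)
  define cf where "cf = (\<lambda>x::real^'n. complex_of_real (flat_deriv 0 (B + (-1) * (x \<bullet> x))) *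
     complex_of_real (inverse (flat_deriv 0 (B + (-1) * (x \<bullet> x)) + flat_deriv 0 ((-A) + 1 * (x \<bullet> x)))))"
  have sm: "smooth_fun cf"
    unfolding cf_def by (intro bump_algebra_smooth[OF AB] bump_algebra.intros)
  have one: "cf x = 1" if "norm x < r1" for x
  proof -
    have "x \<bullet> x < A" unfolding A_def power2_norm_eq_inner[symmetric] using that norm_ge_zero
      by (simp add: power_strict_mono)
    then have "flat_deriv 0 ((-A) + 1 * (x \<bullet> x)) = 0" "flat_deriv 0 (B + (-1) * (x \<bullet> x)) > 0"
      using AB by (auto intro!: flat_deriv_0_eq_0 flat_deriv_0_pos)
    thus ?thesis unfolding cf_def by (simp del: of_real_inverse add: of_real_mult[symmetric])
  qed
  have zero: "cf x = 0" if "r2 \<le> norm x" for x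
  proof -
    have "B \<le> x \<bullet> x" unfolding B_def power2_norm_eq_inner[symmetric] using that r
      by (simp add: power_mono)
    then have "flat_deriv 0 (B + (-1) * (x \<bullet> x)) = 0" by (intro flat_deriv_0_eq_0) simp
    thus ?thesis unfolding cf_def by simp
  qed
  have "\<exists>K. \<forall>x. norm (dpartial is cf x) \<le> K" for "is"
    by (rule bounded_dpartial_if_bounded_support[OF sm, of r2]) (use zero in auto)
  then obtain K where "\<And>is x. norm (dpartial is cf x) \<le> K is" by metis
  with sm one zero show thesis using that by blast
qed

section \<open>Schwartz functions\<close>

lemma schwartz_smooth_fun: "schwartz g \<Longrightarrow> smooth_fun g"
  by (simp add: schwartz_def)

lemma schwartz_bounds:
  assumes "schwartz g"
  obtains K where "\<And>is k x. (1 + norm x) ^ k * norm (dpartial is g x) \<le> K is k"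
proof -
  have "\<forall>p. \<exists>K. \<forall>x. (1 + norm x) ^ snd p * norm (dpartial (fst p) g x) \<le> K"
  proof
    fix p :: "'a list \<times> nat"
    from assms have "bounded (range (\<lambda>x. (1 + norm x) ^ snd p * norm (dpartial (fst p) g x)))"
      by (simp add: schwartz_def)
    then show "\<exists>K. \<forall>x. (1 + norm x) ^ snd p * norm (dpartial (fst p) g x) \<le> K"
      by (auto simp: bounded_iff)
  qed
  then obtain K where "\<forall>p x. (1 + norm x) ^ snd p * norm (dpartial (fst p) g x) \<le> K p"
    by metis
  then show thesis by (intro that[of "\<lambda>is k. K (is, k)"]) auto
qed

lemma schwartzI:
  assumes "smooth_fun g" "\<And>is k. \<exists>K. \<forall>x. (1 + norm x) ^ k * norm (dpartial is g x) \<le> K"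
  shows "schwartz g"
  unfolding schwartz_def
proof (intro conjI assms allI)
  fix "is" k
  obtain K where "\<forall>x. (1 + norm x) ^ k * norm (dpartial is g x) \<le> K" using assms(2) by blast
  then show "bounded (range (\<lambda>x. (1 + norm x) ^ k * norm (dpartial is g x)))"
    unfolding bounded_iff by (intro exI[of _ K]) auto
qed

lemma schwartz_dpartial: "schwartz g \<Longrightarrow> schwartz (dpartial js g)"
  by (simp add: schwartz_def smooth_fun_dpartial dpartial_append[symmetric])

lemma schwartz_mult:
  assumes h: "smooth_fun h" "\<And>is x. norm (dpartial is h x) \<le> Kh is" and f: "schwartz f"
  shows "schwartz (\<lambda>x. h x * f x)"
proof (rule schwartzI)
  show "smooth_fun (\<lambda>x. h x * f x)" using h f by (simp add: smooth_fun_mult schwartz_smooth_fun)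
  obtain Kf where Kf: "\<And>is k x. (1 + norm x) ^ k * norm (dpartial is f x) \<le> Kf is k"
    using schwartz_bounds[OF f] by blast
  fix "is" k
  have "(1 + norm x) ^ k * norm (dpartial is (\<lambda>x. h x * f x) x) \<le>
      (\<Sum>p\<leftarrow>splits is. Kh (fst p) * Kf (snd p) k)" for x
  proof -
    have "(1 + norm x) ^ k * norm (dpartial is (\<lambda>x. h x * f x) x) \<le>
        (1 + norm x) ^ k * (\<Sum>p\<leftarrow>splits is. Kh (fst p) * norm (dpartial (snd p) f x))"
      by (intro mult_left_mono norm_dpartial_mult_le h schwartz_smooth_fun f) simp
    also have "\<dots> = (\<Sum>p\<leftarrow>splits is. Kh (fst p) * ((1 + norm x) ^ k * norm (dpartial (snd p) f x)))"
      by (simp add: sum_list_const_mult[symmetric] mult_ac)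
    also have "\<dots> \<le> (\<Sum>p\<leftarrow>splits is. Kh (fst p) * Kf (snd p) k)"
      using h(2) by (intro sum_list_mono mult_left_mono Kf) (meson norm_ge_zero order_trans)
    finally show ?thesis .
  qed
  then show "\<exists>K. \<forall>x. (1 + norm x) ^ k * norm (dpartial is (\<lambda>x. h x * f x) x) \<le> K" by blast
qed

lemma schwartz_rescale:
  assumes g: "schwartz g" and e: "0 < \<epsilon>"
  shows "schwartz (rescale \<epsilon> g)"
proof (rule schwartzI)
  show "smooth_fun (rescale \<epsilon> g)" using g by (simp add: smooth_fun_rescale schwartz_smooth_fun)
  fix "is" k
  obtain K where K: "\<And>x. (1 + norm x) ^ k * norm (dpartial is g x) \<le> K"
    using schwartz_bounds[OF g] by metis
  define c where "c = inverse \<epsilon>"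
  have c: "0 < c" using e by (simp add: c_def)
  have "(1 + norm x) ^ k * norm (dpartial is (rescale \<epsilon> g) x) \<le>
      c ^ (length is + CARD('a)) * ((1 + \<epsilon>) ^ k * K)" for x :: "real^'a"
  proof -
    have "1 + norm x \<le> (1 + \<epsilon>) * (1 + norm (c *\<^sub>R x))"
      using e c by (simp add: c_def field_simps)
    then have "(1 + norm x) ^ k \<le> (1 + \<epsilon>) ^ k * (1 + norm (c *\<^sub>R x)) ^ k"
      by (metis power_mono power_mult_distrib add_nonneg_nonneg norm_ge_zero zero_le_one)
    then have "(1 + norm x) ^ k * norm (dpartial is g (c *\<^sub>R x))
        \<le> (1 + \<epsilon>) ^ k * ((1 + norm (c *\<^sub>R x)) ^ k * norm (dpartial is g (c *\<^sub>R x)))"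
      by (metis mult.assoc mult_right_mono norm_ge_zero)
    also have "\<dots> \<le> (1 + \<epsilon>) ^ k * K" using K[of "c *\<^sub>R x"] e by (intro mult_left_mono) auto
    finally show ?thesis
      using c unfolding norm_dpartial_rescale[OF schwartz_smooth_fun[OF g] e] c_def[symmetric]
      by (simp add: mult.left_commute mult_left_mono)
  qed
  then show "\<exists>K. \<forall>x. (1 + norm x) ^ k * norm (dpartial is (rescale \<epsilon> g) x) \<le> K" by blast
qed

lemma nn_integral_lborel_scaleR:
  fixes f :: "'a::euclidean_space \<Rightarrow> ennreal"
  assumes [measurable]: "f \<in> borel_measurable borel" and c: "c \<noteq> 0"
  shows "(\<integral>\<^sup>+x. f x \<partial>lborel) = ennreal (\<bar>c\<bar> ^ DIM('a)) * (\<integral>\<^sup>+x. f (c *\<^sub>R x) \<partial>lborel)"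
  by (subst lborel_affine[OF c, of 0])
     (simp add: nn_integral_density nn_integral_distr nn_integral_cmult)

lemma integrable_lborel_scaleR:
  fixes f :: "'a::euclidean_space \<Rightarrow> 'b::{banach, second_countable_topology}"
  assumes f: "integrable lborel f" and c: "c \<noteq> 0"
  shows "integrable lborel (\<lambda>x. f (c *\<^sub>R x))"
proof -
  note [measurable] = borel_measurable_integrable[OF f]
  have "(\<integral>\<^sup>+x. ennreal (norm (f x)) \<partial>lborel) < \<infinity>"
    using f unfolding integrable_iff_bounded by simp
  then have "ennreal (\<bar>c\<bar> ^ DIM('a)) * (\<integral>\<^sup>+x. ennreal (norm (f (c *\<^sub>R x))) \<partial>lborel) < \<infinity>"
    by (subst (asm) nn_integral_lborel_scaleR[OF _ c]) auto
  moreover have "ennreal (\<bar>c\<bar> ^ DIM('a)) \<noteq> 0" using c by simp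
  ultimately have "(\<integral>\<^sup>+x. ennreal (norm (f (c *\<^sub>R x))) \<partial>lborel) < \<infinity>"
    by (metis infinity_ennreal_def top.not_eq_extremum ennreal_mult_eq_top_iff)
  then show ?thesis unfolding integrable_iff_bounded by simp
qed

lemma integral_lborel_scaleR:
  fixes f :: "'a::euclidean_space \<Rightarrow> 'b::{banach, second_countable_topology}"
  assumes c: "c \<noteq> 0"
  shows "(\<integral>x. f x \<partial>lborel) = \<bar>c\<bar> ^ DIM('a) *\<^sub>R (\<integral>x. f (c *\<^sub>R x) \<partial>lborel)"
proof cases
  assume f[measurable]: "integrable lborel f"
  then show ?thesis
    using c f f[THEN borel_measurable_integrable] integrable_lborel_scaleR[OF f c]
    by (subst lborel_affine[OF c, of 0]) (simp add: integral_density integral_distr)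
next
  assume nf: "\<not> integrable lborel f"
  moreover have "\<not> integrable lborel (\<lambda>x. f (c *\<^sub>R x))"
    using integrable_lborel_scaleR[of "\<lambda>x. f (c *\<^sub>R x)" "inverse c"] c nf by auto
  ultimately show ?thesis by (simp add: not_integrable_integral_eq)
qed

lemma integrable_sum_list:
  "(\<And>c. c \<in> set cs \<Longrightarrow> integrable M (F c)) \<Longrightarrow>
   integrable M (\<lambda>x. \<Sum>c\<leftarrow>cs. F c x :: 'b::{banach,second_countable_topology})"
  by (induction cs) auto

lemma norm_integral_le_rescaled_integral:
  fixes F :: "'a::euclidean_space \<Rightarrow> 'b::{banach, second_countable_topology}"
  assumes \<Psi>: "integrable lborel \<Psi>" "\<And>y. 0 \<le> \<Psi> y" and c: "0 < c" and M: "0 \<le> M"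
    and F: "\<And>q. q \<noteq> 0 \<Longrightarrow> norm (F q) \<le> M * (c ^ DIM('a) * \<Psi> (c *\<^sub>R q))"
  shows "norm (LINT q|lborel. F q) \<le> M * (LINT y|lborel. \<Psi> y)"
proof -
  have "integrable lborel (\<lambda>q. M * (c ^ DIM('a) * \<Psi> (c *\<^sub>R q)))"
    using c by (intro integrable_mult_right integrable_lborel_scaleR[OF \<Psi>(1)]) simp
  then have "norm (LINT q|lborel. F q) \<le> (LINT q|lborel. M * (c ^ DIM('a) * \<Psi> (c *\<^sub>R q)))"
    by (intro order_trans[OF integral_norm_bound] integral_mono_AE')
       (use AE_lborel_singleton[of 0] F \<Psi>(2) c M in auto)
  also have "\<dots> = M * (LINT y|lborel. \<Psi> y)"
    using integral_lborel_scaleR[of c \<Psi>] c by simp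
  finally show ?thesis .
qed

text \<open>A product of one-dimensional Cauchy densities dominates \<open>(1 + |x|) ^ (-2N)\<close>.\<close>

lemma integrable_prod_inverse_1_plus_square:
  "integrable lborel (\<lambda>x::'a::euclidean_space. \<Prod>b\<in>Basis. inverse (1 + (x \<bullet> b)\<^sup>2))"
proof (rule integrableI_nonneg)
  show "(\<lambda>x::'a. \<Prod>b\<in>Basis. inverse (1 + (x \<bullet> b)\<^sup>2)) \<in> borel_measurable lborel" by measurable
  show "AE x in lborel. 0 \<le> (\<Prod>b\<in>Basis. inverse (1 + (x \<bullet> b)\<^sup>2))"
    by (intro AE_I2 prod_nonneg) (simp add: add_pos_nonneg)
  define I where "I = (\<integral>\<^sup>+x. ennreal (inverse (1 + x\<^sup>2)) \<partial>lborel)"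
  have "set_integrable lborel (einterval (-\<infinity>) \<infinity>) (\<lambda>x::real. inverse (1 + x\<^sup>2))"
    by (rule integrable_inverse_1_plus_square)
  then have "integrable lborel (\<lambda>x::real. inverse (1 + x\<^sup>2))"
    by (simp add: set_integrable_def einterval_def)
  then have I: "I < \<infinity>"
    unfolding I_def by (subst nn_integral_eq_integral) (auto simp: add_pos_nonneg)
  have "(\<integral>\<^sup>+x. ennreal (\<Prod>b\<in>Basis. inverse (1 + ((x::'a) \<bullet> b)\<^sup>2)) \<partial>lborel)
      = (\<integral>\<^sup>+x. (\<Prod>b\<in>Basis. ennreal (inverse (1 + ((x::'a) \<bullet> b)\<^sup>2))) \<partial>lborel)"
    by (rule nn_integral_cong, rule prod_ennreal[symmetric]) (simp add: add_pos_nonneg)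
  also have "\<dots> = (\<Prod>b\<in>(Basis::'a set). I)"
    unfolding I_def by (rule nn_integral_lborel_prod) auto
  also have "\<dots> < \<infinity>" using I by (simp add: power_less_top_ennreal)
  finally show "(\<integral>\<^sup>+x. ennreal (\<Prod>b\<in>Basis. inverse (1 + ((x::'a) \<bullet> b)\<^sup>2)) \<partial>lborel) < \<infinity>" .
qed

lemma inverse_1_plus_norm_power_le_prod:
  fixes x :: "'a::euclidean_space"
  shows "inverse ((1 + norm x) ^ (2 * DIM('a))) \<le> (\<Prod>b\<in>Basis. inverse (1 + (x \<bullet> b)\<^sup>2))"
proof -
  have "(\<Prod>b\<in>Basis. 1 + (x \<bullet> b)\<^sup>2) \<le> (\<Prod>b\<in>(Basis::'a set). (1 + norm x)\<^sup>2)"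
  proof (rule prod_mono)
    fix b :: 'a assume b: "b \<in> Basis"
    have "(x \<bullet> b)\<^sup>2 \<le> (norm x)\<^sup>2" by (metis Basis_le_norm[OF b] abs_le_square_iff abs_norm_cancel)
    then show "0 \<le> 1 + (x \<bullet> b)\<^sup>2 \<and> 1 + (x \<bullet> b)\<^sup>2 \<le> (1 + norm x)\<^sup>2"
      by (simp add: power2_sum) (use norm_ge_zero[of x] in linarith)
  qed
  also have "\<dots> = (1 + norm x) ^ (2 * DIM('a))" by (simp add: power_mult)
  finally have "(\<Prod>b\<in>Basis. 1 + (x \<bullet> b)\<^sup>2) \<le> (1 + norm x) ^ (2 * DIM('a))" .
  moreover have "0 < (\<Prod>b\<in>(Basis::'a set). 1 + (x \<bullet> b)\<^sup>2)"
    by (intro prod_pos) (simp add: add_pos_nonneg)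
  ultimately have "inverse ((1 + norm x) ^ (2 * DIM('a))) \<le> inverse (\<Prod>b\<in>Basis. 1 + (x \<bullet> b)\<^sup>2)"
    by (rule le_imp_inverse_le)
  then show ?thesis by (simp add: prod_inversef[symmetric] o_def)
qed

lemma integrable_inverse_1_plus_norm_power:
  "integrable lborel (\<lambda>x::'a::euclidean_space. inverse ((1 + norm x) ^ (2 * DIM('a))))"
  by (rule Bochner_Integration.integrable_bound[OF integrable_prod_inverse_1_plus_square])
     (auto intro: order_trans[OF inverse_1_plus_norm_power_le_prod abs_ge_self])

lemma integrable_if_schwartz_dominated:
  fixes g :: "real^'n::finite \<Rightarrow> complex" and F :: "real^'n \<Rightarrow> 'b::{banach,second_countable_topology}"
  assumes g: "schwartz g" and F: "F \<in> borel_measurable lborel"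
    and dom: "\<And>p. norm (F p) \<le> (1 + norm p) ^ n * norm (dpartial is g p)"
  shows "integrable lborel F"
proof -
  obtain K where K: "\<And>x. (1 + norm x) ^ (n + 2 * CARD('n)) * norm (dpartial is g x) \<le> K"
    using schwartz_bounds[OF g] by metis
  have "integrable lborel (\<lambda>x::real^'n. K * inverse ((1 + norm x) ^ (2 * DIM(real^'n))))"
    by (intro integrable_mult_right integrable_inverse_1_plus_norm_power)
  moreover have "norm (F x) \<le> norm (K * inverse ((1 + norm x) ^ (2 * DIM(real^'n))))" for x
  proof -
    have pos: "0 < (1 + norm x) ^ (2 * CARD('n))" by (simp add: add_pos_nonneg)
    have "norm (F x) \<le> (1 + norm x) ^ (n + 2 * CARD('n)) * norm (dpartial is g x)
        * inverse ((1 + norm x) ^ (2 * CARD('n)))"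
      using dom[of x] pos by (simp add: power_add field_simps add_nonneg_eq_0_iff)
    also have "\<dots> \<le> K * inverse ((1 + norm x) ^ (2 * CARD('n)))"
      using K[of x] pos by (intro mult_right_mono) auto
    finally show ?thesis by simp
  qed
  ultimately show ?thesis by (intro Bochner_Integration.integrable_bound[OF _ F] AE_I2)
qed

lemma borel_measurable_dpartial [measurable]: "smooth_fun g \<Longrightarrow> dpartial is g \<in> borel_measurable borel"
  by (rule borel_measurable_continuous_onI[OF smooth_fun_continuous_on_dpartial])

lemma schwartz_integrable: "schwartz g \<Longrightarrow> integrable lborel g"
  by (rule integrable_if_schwartz_dominated[of g g 0 "[]"])
     (auto simp: schwartz_smooth_fun borel_measurable_dpartial[of g "[]", simplified])

lemma integrable_norm_powr_mult_schwartz: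
  fixes g :: "real^'n::finite \<Rightarrow> complex"
  assumes g: "schwartz g" and a: "0 \<le> a"
  shows "integrable lborel (\<lambda>p. norm p powr a * norm (dpartial is g p))"
proof (rule integrable_if_schwartz_dominated[OF g, of _ "nat \<lceil>a\<rceil>" "is"])
  show "(\<lambda>p. norm p powr a * norm (dpartial is g p)) \<in> borel_measurable lborel"
    using schwartz_smooth_fun[OF g] by measurable
  fix p :: "real^'n"
  have "norm p powr a \<le> (1 + norm p) powr a" by (intro powr_mono2 a) auto
  also have "\<dots> \<le> (1 + norm p) powr (nat \<lceil>a\<rceil>)" by (intro powr_mono) (auto simp: real_nat_ceiling_ge)
  also have "\<dots> = (1 + norm p) ^ nat \<lceil>a\<rceil>" by (simp add: powr_realpow add_pos_nonneg)
  finally show "norm (norm p powr a * norm (dpartial is g p)) \<le> (1 + norm p) ^ nat \<lceil>a\<rceil> * norm (dpartial is g p)"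
    by (simp add: mult_right_mono)
qed

section \<open>Schwartz seminorms and tempered distributions\<close>

lemma finite_common_bound:
  assumes "finite S" and "\<And>s. s \<in> S \<Longrightarrow> \<exists>K. P s K"
    and mono: "\<And>s K K'. P s K \<Longrightarrow> K \<le> K' \<Longrightarrow> P s K'"
  shows "\<exists>K::real. \<forall>s\<in>S. P s K"
  using assms(1,2)
proof (induction S rule: finite_induct)
  case (insert s S)
  obtain K1 where "\<forall>s\<in>S. P s K1" using insert by auto
  moreover obtain K2 where "P s K2" using insert by auto
  ultimately have "\<forall>s'\<in>insert s S. P s' (max K1 K2)" using mono by (auto intro: max.cobounded1 max.cobounded2)
  thus ?case by blast
qed simp

lemma finite_seminorm_indices: "finite {(is :: 'n::finite list, k::nat). length is \<le> m \<and> k \<le> m}"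
proof -
  have "finite ({xs :: 'n list. set xs \<subseteq> UNIV \<and> length xs \<le> m} \<times> {..m})"
    by (intro finite_cartesian_product finite_lists_length_le) auto
  moreover have "{(is :: 'n list, k::nat). length is \<le> m \<and> k \<le> m} \<subseteq>
      {xs. set xs \<subseteq> UNIV \<and> length xs \<le> m} \<times> {..m}"
    by auto
  ultimately show ?thesis by (rule finite_subset[rotated])
qed

lemma bdd_above_seminorm_set:
  assumes "schwartz f"
  shows "bdd_above ((\<lambda>(x, is, k). (1 + norm x) ^ k * norm (dpartial is f x))
           ` {(x, is, k). length is \<le> m \<and> k \<le> m})"
proof -
  obtain K where K: "\<And>is k x. (1 + norm x) ^ k * norm (dpartial is f x) \<le> K is k"
    using schwartz_bounds[OF assms] by blast
  have "\<exists>K'. \<forall>s\<in>{(is :: 'a list, k::nat). length is \<le> m \<and> k \<le> m}. K (fst s) (snd s) \<le> K'"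
    by (rule finite_common_bound[OF finite_seminorm_indices]) auto
  then obtain K' where K': "\<And>is k. length is \<le> m \<Longrightarrow> k \<le> m \<Longrightarrow> K is k \<le> K'"
    by fastforce
  show ?thesis unfolding bdd_above_def
  proof (intro exI ballI)
    fix y assume "y \<in> (\<lambda>(x, is, k). (1 + norm x) ^ k * norm (dpartial is f x))
        ` {(x, is, k). length is \<le> m \<and> k \<le> m}"
    then obtain x "is" k where "y = (1 + norm x) ^ k * norm (dpartial is f x)" "length is \<le> m" "k \<le> m"
      by auto
    then show "y \<le> K'" by (meson K K' order_trans)
  qed
qed

lemma seminorm_set_nonempty:
  "(\<lambda>(x, is, k). (1 + norm x) ^ k * norm (dpartial is f x)) ` {(x, is, k). length is \<le> m \<and> k \<le> m} \<noteq> {}"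
proof -
  have "(0, [], 0) \<in> {(x :: real^'a, is :: 'a list, k). length is \<le> m \<and> k \<le> m}" by simp
  then show ?thesis by blast
qed

lemma schwartz_seminorm_upper:
  assumes "schwartz f" "length is \<le> m" "k \<le> m"
  shows "(1 + norm x) ^ k * norm (dpartial is f x) \<le> schwartz_seminorm m f"
  unfolding schwartz_seminorm_def
  by (rule cSup_upper[OF _ bdd_above_seminorm_set[OF assms(1)]]) (use assms(2,3) in force)

lemma schwartz_seminorm_nonneg: "schwartz f \<Longrightarrow> 0 \<le> schwartz_seminorm m f"
  using schwartz_seminorm_upper[of f "[]" m 0 0] by (auto intro: order_trans[OF norm_ge_zero])

lemma schwartz_seminorm_mono:
  assumes "schwartz f" "m \<le> m'"
  shows "schwartz_seminorm m f \<le> schwartz_seminorm m' f"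
  unfolding schwartz_seminorm_def
  by (rule cSup_subset_mono[OF seminorm_set_nonempty bdd_above_seminorm_set[OF assms(1)]])
     (use assms(2) in \<open>force intro!: image_mono\<close>)

lemma schwartz_seminorm_le:
  assumes "\<And>x is k. length is \<le> m \<Longrightarrow> k \<le> m \<Longrightarrow> (1 + norm x) ^ k * norm (dpartial is f x) \<le> B"
  shows "schwartz_seminorm m f \<le> B"
  unfolding schwartz_seminorm_def by (rule cSup_least[OF seminorm_set_nonempty]) (use assms in force)

lemma tempered_add: "tempered T \<Longrightarrow> schwartz f \<Longrightarrow> schwartz g \<Longrightarrow> T (\<lambda>x. f x + g x) = T f + T g"
  unfolding tempered_def by blast

lemma tempered_cmult: "tempered T \<Longrightarrow> schwartz f \<Longrightarrow> T (\<lambda>x. a * f x) = a * T f"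
  unfolding tempered_def by blast

lemma tempered_bound:
  assumes "tempered T"
  obtains C m where "0 \<le> C" "\<And>f. schwartz f \<Longrightarrow> norm (T f) \<le> C * schwartz_seminorm m f"
proof -
  obtain C m where "\<forall>f. schwartz f \<longrightarrow> norm (T f) \<le> C * schwartz_seminorm m f"
    using assms unfolding tempered_def by blast
  then have "norm (T f) \<le> max C 0 * schwartz_seminorm m f" if "schwartz f" for f
    using that schwartz_seminorm_nonneg[OF that, of m]
    by (meson max.cobounded1 mult_right_mono order_trans)
  then show thesis by (intro that[of "max C 0" m]) auto
qed

lemma tempered_fun_dist_one: "tempered (fun_dist (\<lambda>_. 1) :: (real^'n::finite \<Rightarrow> complex) \<Rightarrow> complex)"
  unfolding tempered_def
proof (intro conjI allI impI)
  fix f g :: "real^'n \<Rightarrow> complex" assume "schwartz f \<and> schwartz g"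
  then show "fun_dist (\<lambda>_. 1) (\<lambda>x. f x + g x) = fun_dist (\<lambda>_. 1) f + fun_dist (\<lambda>_. 1) g"
    by (simp add: fun_dist_def schwartz_integrable distrib_left)
next
  fix f :: "real^'n \<Rightarrow> complex" and a :: complex
  show "fun_dist (\<lambda>_. 1) (\<lambda>x. a * f x) = a * fun_dist (\<lambda>_. 1) f"
    by (simp add: fun_dist_def)
next
  define W where "W = (\<lambda>x::real^'n. inverse ((1 + norm x) ^ (2 * CARD('n))))"
  have W: "integrable lborel W" "\<And>x. 0 < (1 + norm x) ^ (2 * CARD('n))"
    unfolding W_def using integrable_inverse_1_plus_norm_power[where 'a="real^'n"]
    by (auto simp: add_pos_nonneg)
  show "\<exists>C m. \<forall>f. schwartz f \<longrightarrow> norm (fun_dist (\<lambda>_. 1) f) \<le> C * schwartz_seminorm m (f :: real^'n \<Rightarrow> complex)"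
  proof (intro exI allI impI)
    fix f :: "real^'n \<Rightarrow> complex" assume f: "schwartz f"
    let ?S = "schwartz_seminorm (2 * CARD('n)) f"
    have "norm (f x) \<le> ?S * W x" for x
      using schwartz_seminorm_upper[OF f, of "[]" _ "2 * CARD('n)" x] W(2)[of x]
      unfolding W_def by (simp add: field_simps)
    then have "norm (LINT q|lborel. f q) \<le> (LINT q|lborel. ?S * W q)"
      by (intro order_trans[OF integral_norm_bound] integral_mono integrable_mult_right W(1)
          schwartz_integrable[OF f] integrable_norm)
    then have "norm (normc TYPE('n)) * norm (LINT q|lborel. f q) \<le> norm (normc TYPE('n)) * (LINT q|lborel. ?S * W q)"
      by (rule mult_left_mono) simp
    then show "norm (fun_dist (\<lambda>_. 1) f) \<le> (norm (normc TYPE('n)) * (LINT q|lborel. W q)) * ?S"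
      by (simp add: fun_dist_def norm_mult mult_ac)
  qed
qed

lemma tempered_diff_cmult:
  assumes T1: "tempered T1" and T2: "tempered T2"
  shows "tempered (\<lambda>\<phi>. T1 \<phi> - c * T2 \<phi>)"
  unfolding tempered_def
proof (intro conjI allI impI)
  fix f g :: "real^'a \<Rightarrow> complex" assume "schwartz f \<and> schwartz g"
  then show "T1 (\<lambda>x. f x + g x) - c * T2 (\<lambda>x. f x + g x) = T1 f - c * T2 f + (T1 g - c * T2 g)"
    using tempered_add[OF T1] tempered_add[OF T2] by (simp add: algebra_simps)
next
  fix f :: "real^'a \<Rightarrow> complex" and a :: complex assume "schwartz f"
  then show "T1 (\<lambda>x. a * f x) - c * T2 (\<lambda>x. a * f x) = a * (T1 f - c * T2 f)"
    using tempered_cmult[OF T1] tempered_cmult[OF T2] by (simp add: algebra_simps)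
next
  obtain C1 m1 where C1: "0 \<le> C1" "\<And>f. schwartz f \<Longrightarrow> norm (T1 f) \<le> C1 * schwartz_seminorm m1 f"
    using tempered_bound[OF T1] by blast
  obtain C2 m2 where C2: "0 \<le> C2" "\<And>f. schwartz f \<Longrightarrow> norm (T2 f) \<le> C2 * schwartz_seminorm m2 f"
    using tempered_bound[OF T2] by blast
  show "\<exists>C m. \<forall>f. schwartz f \<longrightarrow> norm (T1 f - c * T2 f) \<le> C * schwartz_seminorm m (f :: real^'a \<Rightarrow> complex)"
  proof (intro exI allI impI)
    fix f :: "real^'a \<Rightarrow> complex" assume f: "schwartz f"
    let ?S = "schwartz_seminorm (max m1 m2) f"
    have "norm (T1 f) \<le> C1 * ?S"
      using C1 schwartz_seminorm_mono[OF f, of m1 "max m1 m2"] f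
      by (meson max.cobounded1 mult_left_mono order_trans)
    moreover have "norm (T2 f) \<le> C2 * ?S"
      using C2 schwartz_seminorm_mono[OF f, of m2 "max m1 m2"] f
      by (meson max.cobounded2 mult_left_mono order_trans)
    ultimately have "norm (T1 f) + norm c * norm (T2 f) \<le> C1 * ?S + norm c * (C2 * ?S)"
      by (intro add_mono mult_left_mono) auto
    moreover have "norm (T1 f - c * T2 f) \<le> norm (T1 f) + norm c * norm (T2 f)"
      by (metis norm_mult norm_triangle_ineq4)
    ultimately show "norm (T1 f - c * T2 f) \<le> (C1 + norm c * C2) * ?S"
      by (simp add: algebra_simps)
  qed
qed

lemma count_list_mlist: "count_list (mlist (\<alpha> :: 'n::finite \<Rightarrow> nat)) i = \<alpha> i"
proof -
  obtain xs :: "'n list" where xs: "set xs = UNIV" "distinct xs"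
    using finite_distinct_list[of "UNIV :: 'n set"] by auto
  define ys where "ys = concat (map (\<lambda>j. replicate (\<alpha> j) j) xs)"
  have replicate: "count_list (replicate n j) i = (if j = i then n else 0)" for n and i j :: 'n
    by (induction n) auto
  have "count_list ys i = (if i \<in> set xs then \<alpha> i else 0)" for i
    unfolding ys_def using xs(2) by (induction xs) (auto simp: replicate)
  with xs have "\<exists>ys. \<forall>i. count_list ys i = \<alpha> i" by auto
  then show ?thesis
    unfolding mlist_def by (rule someI_ex[where P="\<lambda>ys. \<forall>i. count_list ys i = \<alpha> i", THEN spec])
qed

lemma length_mlist: "length (mlist (\<alpha> :: 'n::finite \<Rightarrow> nat)) = mabs \<alpha>"
  using sum_count_set[of "mlist \<alpha>" "UNIV :: 'n set"] by (simp add: mabs_def count_list_mlist)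

section \<open>Bounds of order \<open>\<epsilon>\<^sup>\<delta>\<close>\<close>

definition powr_bounded :: "(real \<Rightarrow> 'a::real_normed_vector) \<Rightarrow> real \<Rightarrow> bool" where
  "powr_bounded f \<delta> \<longleftrightarrow> (\<exists>K. \<forall>\<epsilon>. 0 < \<epsilon> \<and> \<epsilon> \<le> 1 \<longrightarrow> norm (f \<epsilon>) \<le> K * \<epsilon> powr \<delta>)"

lemma powr_boundedI:
  "(\<And>\<epsilon>. 0 < \<epsilon> \<Longrightarrow> \<epsilon> \<le> 1 \<Longrightarrow> norm (f \<epsilon>) \<le> K * \<epsilon> powr \<delta>) \<Longrightarrow> powr_bounded f \<delta>"
  unfolding powr_bounded_def by blast

lemma powr_boundedE:
  assumes "powr_bounded f \<delta>"
  obtains K where "0 \<le> K" "\<And>\<epsilon>. 0 < \<epsilon> \<Longrightarrow> \<epsilon> \<le> 1 \<Longrightarrow> norm (f \<epsilon>) \<le> K * \<epsilon> powr \<delta>"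
proof -
  obtain K where "\<forall>\<epsilon>. 0 < \<epsilon> \<and> \<epsilon> \<le> 1 \<longrightarrow> norm (f \<epsilon>) \<le> K * \<epsilon> powr \<delta>"
    using assms unfolding powr_bounded_def by blast
  then have "norm (f \<epsilon>) \<le> max K 0 * \<epsilon> powr \<delta>" if "0 < \<epsilon>" "\<epsilon> \<le> 1" for \<epsilon>
    using that by (meson max.cobounded1 mult_right_mono order_trans powr_ge_zero)
  then show thesis by (intro that[of "max K 0"]) auto
qed

lemma powr_bounded_mono:
  assumes "powr_bounded g \<delta>" "\<And>\<epsilon>. 0 < \<epsilon> \<Longrightarrow> \<epsilon> \<le> 1 \<Longrightarrow> norm (f \<epsilon>) \<le> C * norm (g \<epsilon>)" "0 \<le> C"
  shows "powr_bounded f \<delta>"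
proof -
  obtain K where K: "\<And>\<epsilon>. 0 < \<epsilon> \<Longrightarrow> \<epsilon> \<le> 1 \<Longrightarrow> norm (g \<epsilon>) \<le> K * \<epsilon> powr \<delta>"
    using powr_boundedE[OF assms(1)] by blast
  show ?thesis
  proof (rule powr_boundedI)
    fix \<epsilon> :: real assume "0 < \<epsilon>" "\<epsilon> \<le> 1"
    then show "norm (f \<epsilon>) \<le> (C * K) * \<epsilon> powr \<delta>"
      using assms(2,3) K by (metis mult.assoc mult_left_mono order_trans)
  qed
qed

lemma powr_bounded_add:
  assumes "powr_bounded f \<delta>" "powr_bounded g \<delta>"
  shows "powr_bounded (\<lambda>\<epsilon>. f \<epsilon> + g \<epsilon>) \<delta>"
proof -
  obtain K1 K2 where "\<And>\<epsilon>. 0 < \<epsilon> \<Longrightarrow> \<epsilon> \<le> 1 \<Longrightarrow> norm (f \<epsilon>) \<le> K1 * \<epsilon> powr \<delta>"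
    "\<And>\<epsilon>. 0 < \<epsilon> \<Longrightarrow> \<epsilon> \<le> 1 \<Longrightarrow> norm (g \<epsilon>) \<le> K2 * \<epsilon> powr \<delta>"
    using powr_boundedE[OF assms(1)] powr_boundedE[OF assms(2)] by metis
  then show ?thesis
    by (intro powr_boundedI[of _ "K1 + K2"]) (smt (verit) distrib_right norm_triangle_ineq)
qed

lemma powr_bounded_sum:
  "finite A \<Longrightarrow> (\<And>a. a \<in> A \<Longrightarrow> powr_bounded (f a) \<delta>) \<Longrightarrow> powr_bounded (\<lambda>\<epsilon>. \<Sum>a\<in>A. f a \<epsilon>) \<delta>"
proof (induction A rule: finite_induct)
  case empty
  show ?case by (rule powr_boundedI[of _ 0]) simp
next
  case (insert a A)
  then show ?case by (simp add: powr_bounded_add)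
qed

lemma powr_bounded_mult_inverse_power:
  fixes f :: "real \<Rightarrow> 'a::real_normed_div_algebra"
  assumes "powr_bounded f \<delta>"
  shows "powr_bounded (\<lambda>\<epsilon>. of_real (inverse \<epsilon>) ^ m * f \<epsilon>) (\<delta> - real m)"
proof -
  obtain K where K: "\<And>\<epsilon>. 0 < \<epsilon> \<Longrightarrow> \<epsilon> \<le> 1 \<Longrightarrow> norm (f \<epsilon>) \<le> K * \<epsilon> powr \<delta>"
    using powr_boundedE[OF assms] by blast
  show ?thesis
  proof (rule powr_boundedI)
    fix \<epsilon> :: real assume e: "0 < \<epsilon>" "\<epsilon> \<le> 1"
    have "norm (of_real (inverse \<epsilon>) ^ m * f \<epsilon>) = inverse \<epsilon> ^ m * norm (f \<epsilon>)"
      using e by (simp add: norm_mult norm_power norm_inverse)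
    also have "\<dots> \<le> inverse \<epsilon> ^ m * (K * \<epsilon> powr \<delta>)" using K e by (intro mult_left_mono) auto
    also have "\<dots> = K * \<epsilon> powr (\<delta> - real m)"
      using e by (simp add: powr_diff powr_realpow power_inverse divide_inverse mult_ac)
    finally show "norm (of_real (inverse \<epsilon>) ^ m * f \<epsilon>) \<le> K * \<epsilon> powr (\<delta> - real m)" .
  qed
qed

lemma eventually_at_right_0_le_1: "\<forall>\<^sub>F \<epsilon> in at_right (0::real). 0 < \<epsilon> \<and> \<epsilon> \<le> 1"
  unfolding eventually_at_right_field by (intro exI[of _ 1]) auto

lemma powr_bounded_imp_bigo:
  fixes f :: "real \<Rightarrow> 'a::real_normed_field"
  assumes "powr_bounded f \<delta>"
  shows "f \<in> O[at_right 0](\<lambda>\<epsilon>. of_real (\<epsilon> powr \<delta>))"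
proof -
  obtain K where K: "\<And>\<epsilon>. 0 < \<epsilon> \<Longrightarrow> \<epsilon> \<le> 1 \<Longrightarrow> norm (f \<epsilon>) \<le> K * \<epsilon> powr \<delta>"
    using powr_boundedE[OF assms] by blast
  show ?thesis by (rule bigoI[OF eventually_mono[OF eventually_at_right_0_le_1]]) (use K in auto)
qed

lemma powr_bounded_tendsto_0:
  assumes "powr_bounded f \<delta>" "0 < \<delta>"
  shows "(f \<longlongrightarrow> 0) (at_right 0)"
proof -
  obtain K where K: "\<And>\<epsilon>. 0 < \<epsilon> \<Longrightarrow> \<epsilon> \<le> 1 \<Longrightarrow> norm (f \<epsilon>) \<le> K * \<epsilon> powr \<delta>"
    using powr_boundedE[OF assms(1)] by blast
  have "((\<lambda>\<epsilon>::real. \<epsilon> powr \<delta>) \<longlongrightarrow> 0) (at_right 0)"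
    by (rule tendsto_zero_powrI[OF tendsto_ident_at tendsto_const _ assms(2)])
       (use eventually_at_right_0_le_1 in \<open>auto elim: eventually_mono\<close>)
  moreover have "\<forall>\<^sub>F \<epsilon> in at_right 0. norm (f \<epsilon>) \<le> norm (\<epsilon> powr \<delta>) * K"
    using eventually_at_right_0_le_1 by eventually_elim (use K in \<open>auto simp: mult.commute\<close>)
  ultimately show ?thesis by (rule tendsto_0_le)
qed

section \<open>The scaling estimate\<close>

lemma norm_dpartial_mult_rescale_le:
  fixes x :: "real^'n::finite"
  assumes "smooth_fun h" "\<And>js y. norm (dpartial js h y) \<le> Kh js" "smooth_fun g" "0 < \<epsilon>"
  shows "norm (dpartial is (\<lambda>y. h y * rescale \<epsilon> g y) x) \<le> (\<Sum>p\<leftarrow>splits is. Kh (fst p) *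
    (inverse \<epsilon> ^ (length (snd p) + CARD('n)) * norm (dpartial (snd p) g (inverse \<epsilon> *\<^sub>R x))))"
proof -
  have "norm (dpartial is (\<lambda>y. h y * rescale \<epsilon> g y) x) \<le>
      (\<Sum>p\<leftarrow>splits is. Kh (fst p) * norm (dpartial (snd p) (rescale \<epsilon> g) x))"
    by (rule norm_dpartial_mult_le[OF assms(1) smooth_fun_rescale[OF assms(3)] assms(2)])
  also have "\<dots> = (\<Sum>p\<leftarrow>splits is. Kh (fst p) *
      (inverse \<epsilon> ^ (length (snd p) + CARD('n)) * norm (dpartial (snd p) g (inverse \<epsilon> *\<^sub>R x))))"
    by (simp add: norm_dpartial_rescale[OF assms(3,4)])
  finally show ?thesis .
qed

lemma norm_powr_mult_inverse_power_le:
  fixes q :: "'a::real_normed_vector"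
  assumes "0 < \<epsilon>" "\<epsilon> \<le> 1" "l \<le> L" "0 \<le> \<delta> + real L"
  shows "norm q powr (\<delta> + real L) * inverse \<epsilon> ^ l \<le> \<epsilon> powr \<delta> * norm (inverse \<epsilon> *\<^sub>R q) powr (\<delta> + real L)"
proof -
  have "inverse \<epsilon> ^ l = \<epsilon> powr (- real l)"
    using assms(1) by (simp add: powr_minus powr_realpow power_inverse)
  also have "\<dots> \<le> \<epsilon> powr (- real L)" using assms by (intro powr_mono') auto
  finally have "norm q powr (\<delta> + real L) * inverse \<epsilon> ^ l \<le> norm q powr (\<delta> + real L) * \<epsilon> powr (- real L)"
    by (intro mult_left_mono) auto
  also have "\<epsilon> powr (- real L) = \<epsilon> powr \<delta> * inverse \<epsilon> powr (\<delta> + real L)"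
    using assms(1) by (simp add: inverse_powr powr_minus powr_add)
  also have "norm q powr (\<delta> + real L) * (\<epsilon> powr \<delta> * inverse \<epsilon> powr (\<delta> + real L)) =
      \<epsilon> powr \<delta> * norm (inverse \<epsilon> *\<^sub>R q) powr (\<delta> + real L)"
    using assms(1) by (simp add: powr_mult mult_ac)
  finally show ?thesis .
qed

lemma near_part_pointwise_le:
  fixes q :: "real^'n::finite"
  assumes h: "smooth_fun h" "\<And>js y. norm (dpartial js h y) \<le> Kh js" and g: "smooth_fun g"
    and e: "0 < \<epsilon>" "\<epsilon> \<le> 1" and a: "0 \<le> \<delta> + real (length js)"
  shows "norm q powr (\<delta> + real (length js)) * norm (dpartial js (\<lambda>y. h y * rescale \<epsilon> g y) q) \<le>
    \<epsilon> powr \<delta> * inverse \<epsilon> ^ CARD('n) * (\<Sum>p\<leftarrow>splits js. Kh (fst p) *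
      (norm (inverse \<epsilon> *\<^sub>R q) powr (\<delta> + real (length js)) * norm (dpartial (snd p) g (inverse \<epsilon> *\<^sub>R q))))"
proof -
  let ?a = "\<delta> + real (length js)" and ?c = "inverse \<epsilon>" and ?y = "inverse \<epsilon> *\<^sub>R q"
  have Kh0: "0 \<le> Kh js'" for js' using h(2) norm_ge_zero order_trans by blast
  have "norm q powr ?a * norm (dpartial js (\<lambda>y. h y * rescale \<epsilon> g y) q) \<le>
      norm q powr ?a * (\<Sum>p\<leftarrow>splits js. Kh (fst p) *
        (?c ^ (length (snd p) + CARD('n)) * norm (dpartial (snd p) g ?y)))"
    by (intro mult_left_mono norm_dpartial_mult_rescale_le h g e) simp
  also have "\<dots> = (\<Sum>p\<leftarrow>splits js. Kh (fst p) * ?c ^ CARD('n) * norm (dpartial (snd p) g ?y) *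
      (norm q powr ?a * ?c ^ length (snd p)))"
    by (simp add: sum_list_const_mult[symmetric] power_add mult_ac)
  also have "\<dots> \<le> (\<Sum>p\<leftarrow>splits js. Kh (fst p) * ?c ^ CARD('n) * norm (dpartial (snd p) g ?y) *
      (\<epsilon> powr \<delta> * norm ?y powr ?a))"
    using e a Kh0 length_snd_splits_le
    by (intro sum_list_mono mult_left_mono norm_powr_mult_inverse_power_le) auto
  also have "\<dots> = \<epsilon> powr \<delta> * ?c ^ CARD('n) * (\<Sum>p\<leftarrow>splits js. Kh (fst p) *
      (norm ?y powr ?a * norm (dpartial (snd p) g ?y)))"
    by (simp add: sum_list_const_mult[symmetric] mult_ac)
  finally show ?thesis .
qed

lemma near_part_integral_bound:
  fixes t h g :: "real^'n::finite \<Rightarrow> complex"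
  assumes h: "smooth_fun h" "\<And>js y. norm (dpartial js h y) \<le> Kh js" "\<And>x. r \<le> norm x \<Longrightarrow> h x = 0"
    and t: "\<And>q. q \<noteq> 0 \<Longrightarrow> norm q \<le> r \<Longrightarrow> norm (t q) \<le> C * norm q powr (\<delta> + real (length js))"
    and t0: "\<And>q. \<delta> + real (length js) < 0 \<Longrightarrow> norm q \<le> r \<Longrightarrow> t q = 0"
    and g: "schwartz g"
  shows "powr_bounded (\<lambda>\<epsilon>. LINT q|lborel. t q * dpartial js (\<lambda>y. h y * rescale \<epsilon> g y) q) \<delta>"
proof -
  let ?a = "\<delta> + real (length js)" and ?D = "\<lambda>\<epsilon>. dpartial js (\<lambda>y. h y * rescale \<epsilon> g y)"
  have outside: "?D \<epsilon> q = 0" if "r < norm q" for \<epsilon> q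
    by (rule dpartial_eq_0_open[of "{x. r < norm x}"]) (use that h(3) in \<open>auto intro: open_Collect_less continuous_on_norm_id\<close>)
  show ?thesis
  proof (cases "?a < 0")
    case True
    have "t q * ?D \<epsilon> q = 0" for \<epsilon> q
    proof (cases "norm q \<le> r")
      case True
      then show ?thesis using t0[OF \<open>?a < 0\<close>] by simp
    qed (simp add: outside)
    then have "(\<lambda>q. t q * ?D \<epsilon> q) = (\<lambda>_. 0)" for \<epsilon>
      by (intro ext)
    then show ?thesis by (intro powr_boundedI[of _ 0]) simp
  next
    case False
    define \<Psi> where "\<Psi> = (\<lambda>y. \<Sum>p\<leftarrow>splits js. Kh (fst p) * (norm y powr ?a * norm (dpartial (snd p) g y)))"
    have \<Psi>: "integrable lborel \<Psi>" unfolding \<Psi>_def using False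
      by (intro integrable_sum_list integrable_mult_right integrable_norm_powr_mult_schwartz[OF g]) auto
    have \<Psi>0: "0 \<le> \<Psi> y" for y
    proof -
      have "0 \<le> Kh js'" for js' using h(2) norm_ge_zero order_trans by blast
      then show ?thesis unfolding \<Psi>_def by (intro sum_list_nonneg) auto
    qed
    show ?thesis
    proof (rule powr_boundedI)
      fix \<epsilon> :: real assume e: "0 < \<epsilon>" "\<epsilon> \<le> 1"
      have bound: "norm (t q * ?D \<epsilon> q) \<le>
          max C 0 * \<epsilon> powr \<delta> * (inverse \<epsilon> ^ DIM(real^'n) * \<Psi> (inverse \<epsilon> *\<^sub>R q))"
        if "q \<noteq> 0" for q
      proof (cases "norm q \<le> r")
        case True
        have "norm (t q) \<le> max C 0 * norm q powr ?a"
          using t[OF that True] by (metis max.cobounded1 mult_right_mono order_trans powr_ge_zero)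
        then have "norm (t q * ?D \<epsilon> q) \<le> max C 0 * (norm q powr ?a * norm (?D \<epsilon> q))"
          unfolding norm_mult mult.assoc[symmetric] by (rule mult_right_mono) simp
        also have "\<dots> \<le> max C 0 * (\<epsilon> powr \<delta> * inverse \<epsilon> ^ CARD('n) * \<Psi> (inverse \<epsilon> *\<^sub>R q))"
          unfolding \<Psi>_def using False
          by (intro mult_left_mono near_part_pointwise_le[OF h(1,2) schwartz_smooth_fun[OF g] e]) auto
        finally show ?thesis by (simp add: mult_ac)
      qed (use outside \<Psi>0 e in simp)
      have "norm (LINT q|lborel. t q * ?D \<epsilon> q) \<le> max C 0 * \<epsilon> powr \<delta> * (LINT y|lborel. \<Psi> y)"
        by (rule norm_integral_le_rescaled_integral[OF \<Psi> \<Psi>0 _ _ bound]) (use e in auto)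
      then show "norm (LINT q|lborel. t q * ?D \<epsilon> q) \<le> (max C 0 * (LINT y|lborel. \<Psi> y)) * \<epsilon> powr \<delta>"
        by (simp add: mult_ac)
    qed
  qed
qed

lemma one_plus_norm_power_mult_inverse_power_le:
  fixes x :: "'a::real_normed_vector"
  assumes e: "0 < \<epsilon>" "\<epsilon> \<le> 1" and \<rho>: "0 < \<rho>" "\<rho> \<le> norm x"
    and G: "0 \<le> G" "(1 + norm (inverse \<epsilon> *\<^sub>R x)) ^ (k + (m + n)) * G \<le> KG"
  shows "(1 + norm x) ^ k * inverse \<epsilon> ^ m * G \<le> \<epsilon> ^ n * (KG / \<rho> ^ (m + n))"
proof -
  define c where "c = inverse \<epsilon>"
  define y where "y = c *\<^sub>R x"
  have c: "0 < c" "1 \<le> c" using e by (auto simp: c_def one_le_inverse)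
  have ny: "norm y = c * norm x" using c by (simp add: y_def)
  have "(1 + norm x) ^ k \<le> (1 + norm y) ^ k"
    using c by (intro power_mono) (auto simp: ny intro: order_trans[OF _ mult_right_mono[of 1 c]])
  moreover have "c * \<rho> \<le> norm y" unfolding ny using c \<rho> by (intro mult_left_mono) auto
  then have "c \<le> (1 + norm y) / \<rho>" using \<rho> by (simp add: field_simps)
  then have "c ^ (m + n) \<le> ((1 + norm y) / \<rho>) ^ (m + n)" using c by (intro power_mono) auto
  ultimately have "(1 + norm x) ^ k * c ^ (m + n) * G \<le> (1 + norm y) ^ k * ((1 + norm y) / \<rho>) ^ (m + n) * G"
    using c G(1) by (intro mult_right_mono mult_mono) auto
  also have "\<dots> = (1 + norm y) ^ (k + (m + n)) * G / \<rho> ^ (m + n)" by (simp add: power_add power_divide)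
  also have "\<dots> \<le> KG / \<rho> ^ (m + n)" using G(2) \<rho> unfolding y_def c_def by (intro divide_right_mono) auto
  finally have *: "(1 + norm x) ^ k * c ^ (m + n) * G \<le> KG / \<rho> ^ (m + n)" .
  have "(1 + norm x) ^ k * c ^ m * G = \<epsilon> ^ n * ((1 + norm x) ^ k * c ^ (m + n) * G)"
    using e by (simp add: c_def power_add field_simps)
  also have "\<dots> \<le> \<epsilon> ^ n * (KG / \<rho> ^ (m + n))" using * e by (intro mult_left_mono) auto
  finally show ?thesis by (simp add: c_def)
qed

lemma far_part_pointwise_bound:
  fixes h g :: "real^'n::finite \<Rightarrow> complex"
  assumes h: "smooth_fun h" "\<And>js y. norm (dpartial js h y) \<le> Kh js" "\<And>x. norm x < \<rho> \<Longrightarrow> h x = 0"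
    and \<rho>: "0 < \<rho>" and g: "schwartz g"
  shows "\<exists>K. \<forall>\<epsilon> x. 0 < \<epsilon> \<and> \<epsilon> \<le> 1 \<longrightarrow>
    (1 + norm x) ^ k * norm (dpartial is (\<lambda>y. h y * rescale \<epsilon> g y) x) \<le> K * \<epsilon> ^ n"
proof -
  obtain Kg where Kg: "\<And>is k y. (1 + norm y) ^ k * norm (dpartial is g y) \<le> Kg is k"
    using schwartz_bounds[OF g] by blast
  have Kh0: "0 \<le> Kh js" for js using h(2) norm_ge_zero order_trans by blast
  define L where "L = (\<lambda>p::'n list \<times> 'n list. length (snd p) + CARD('n))"
  define K where "K = (\<Sum>p\<leftarrow>splits is. Kh (fst p) * (Kg (snd p) (k + (L p + n)) / \<rho> ^ (L p + n)))"
  have Kg0: "0 \<le> Kg js j" for js j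
    by (rule order_trans[OF _ Kg[where y=0]]) simp
  have K0: "0 \<le> K"
    unfolding K_def using \<rho> Kh0 Kg0 by (intro sum_list_nonneg) auto
  have "(1 + norm x) ^ k * norm (dpartial is (\<lambda>y. h y * rescale \<epsilon> g y) x) \<le> K * \<epsilon> ^ n"
    if e: "0 < \<epsilon>" "\<epsilon> \<le> 1" for \<epsilon> x
  proof (cases "norm x < \<rho>")
    case True
    have "dpartial is (\<lambda>y. h y * rescale \<epsilon> g y) x = 0"
      by (rule dpartial_eq_0_open[of "{x. norm x < \<rho>}"])
         (use True h(3) in \<open>auto intro: open_Collect_less continuous_on_norm_id\<close>)
    then show ?thesis using K0 e by simp
  next
    case False
    have "(1 + norm x) ^ k * norm (dpartial is (\<lambda>y. h y * rescale \<epsilon> g y) x) \<le>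
        (1 + norm x) ^ k * (\<Sum>p\<leftarrow>splits is. Kh (fst p) *
          (inverse \<epsilon> ^ L p * norm (dpartial (snd p) g (inverse \<epsilon> *\<^sub>R x))))"
      unfolding L_def by (intro mult_left_mono norm_dpartial_mult_rescale_le h schwartz_smooth_fun g e) simp
    also have "\<dots> = (\<Sum>p\<leftarrow>splits is. Kh (fst p) *
        ((1 + norm x) ^ k * inverse \<epsilon> ^ L p * norm (dpartial (snd p) g (inverse \<epsilon> *\<^sub>R x))))"
      by (simp add: sum_list_const_mult[symmetric] mult_ac)
    also have "\<dots> \<le> (\<Sum>p\<leftarrow>splits is. Kh (fst p) * (\<epsilon> ^ n * (Kg (snd p) (k + (L p + n)) / \<rho> ^ (L p + n))))"
      using e \<rho> False Kh0
      by (intro sum_list_mono mult_left_mono one_plus_norm_power_mult_inverse_power_le Kg) auto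
    also have "\<dots> = K * \<epsilon> ^ n"
      by (simp add: K_def sum_list_const_mult[symmetric] mult_ac)
    finally show ?thesis .
  qed
  then show ?thesis by blast
qed

lemma far_part_seminorm_bound:
  fixes h g :: "real^'n::finite \<Rightarrow> complex"
  assumes h: "smooth_fun h" "\<And>js y. norm (dpartial js h y) \<le> Kh js" "\<And>x. norm x < \<rho> \<Longrightarrow> h x = 0"
    and \<rho>: "0 < \<rho>" and g: "schwartz g"
  shows "powr_bounded (\<lambda>\<epsilon>. schwartz_seminorm m (\<lambda>x. h x * rescale \<epsilon> g x)) \<delta>"
proof -
  define n where "n = nat \<lceil>\<delta>\<rceil>"
  have "\<exists>K. \<forall>s\<in>{(is :: 'n list, k::nat). length is \<le> m \<and> k \<le> m}. \<forall>\<epsilon> x. 0 < \<epsilon> \<and> \<epsilon> \<le> 1 \<longrightarrow>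
      (1 + norm x) ^ snd s * norm (dpartial (fst s) (\<lambda>y. h y * rescale \<epsilon> g y) x) \<le> K * \<epsilon> ^ n"
  proof (rule finite_common_bound[OF finite_seminorm_indices])
    fix s and K K' :: real
    assume "\<forall>\<epsilon> x. 0 < \<epsilon> \<and> \<epsilon> \<le> 1 \<longrightarrow>
        (1 + norm x) ^ snd s * norm (dpartial (fst s) (\<lambda>y. h y * rescale \<epsilon> g y) x) \<le> K * \<epsilon> ^ n"
      and "K \<le> K'"
    then show "\<forall>\<epsilon> x. 0 < \<epsilon> \<and> \<epsilon> \<le> 1 \<longrightarrow>
        (1 + norm x) ^ snd s * norm (dpartial (fst s) (\<lambda>y. h y * rescale \<epsilon> g y) x) \<le> K' * \<epsilon> ^ n"
      by (meson less_imp_le mult_right_mono order_trans zero_le_power)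
  qed (use far_part_pointwise_bound[OF h \<rho> g] in blast)
  then obtain K where K: "\<And>is k \<epsilon> x. length is \<le> m \<Longrightarrow> k \<le> m \<Longrightarrow> 0 < \<epsilon> \<Longrightarrow> \<epsilon> \<le> 1 \<Longrightarrow>
      (1 + norm x) ^ k * norm (dpartial is (\<lambda>y. h y * rescale \<epsilon> g y) x) \<le> K * \<epsilon> ^ n"
    by fastforce
  show ?thesis
  proof (rule powr_boundedI)
    fix \<epsilon> :: real assume e: "0 < \<epsilon>" "\<epsilon> \<le> 1"
    have "\<epsilon> ^ n \<le> \<epsilon> powr \<delta>"
      using e by (simp add: n_def powr_realpow[symmetric] powr_mono' real_nat_ceiling_ge)
    then have "schwartz_seminorm m (\<lambda>x. h x * rescale \<epsilon> g x) \<le> max K 0 * \<epsilon> powr \<delta>"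
      using K e by (intro schwartz_seminorm_le)
        (meson max.cobounded1 mult_mono order_trans zero_le_power less_imp_le max.cobounded2)
    moreover have "schwartz (\<lambda>x. h x * rescale \<epsilon> g x)"
      by (rule schwartz_mult[OF h(1,2) schwartz_rescale[OF g e(1)]])
    ultimately show "norm (schwartz_seminorm m (\<lambda>x. h x * rescale \<epsilon> g x)) \<le> max K 0 * \<epsilon> powr \<delta>"
      by (simp add: schwartz_seminorm_nonneg)
  qed
qed

lemma tsupport_subset_cball:
  assumes "\<And>x. r \<le> norm x \<Longrightarrow> \<phi> x = 0"
  shows "tsupport \<phi> \<subseteq> cball 0 r" "compact (tsupport \<phi>)"
proof -
  have "{x. \<phi> x \<noteq> 0} \<subseteq> cball 0 r"
  proof
    fix x assume "x \<in> {x. \<phi> x \<noteq> 0}"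
    then have "\<not> r \<le> norm x" using assms by auto
    then show "x \<in> cball 0 r" by simp
  qed
  then show supp: "tsupport \<phi> \<subseteq> cball 0 r"
    unfolding tsupport_def by (rule closure_minimal) simp
  show "compact (tsupport \<phi>)"
    unfolding compact_eq_bounded_closed
    by (metis supp bounded_cball bounded_subset closed_closure tsupport_def)
qed

lemma Odist_cutoff_bound:
  fixes T :: "(real^'n::finite \<Rightarrow> complex) \<Rightarrow> complex"
  assumes O: "Odist T \<delta>" and g: "schwartz g"
  obtains r where "0 < r"
    "\<And>h Kh. smooth_fun h \<Longrightarrow> (\<And>js y. norm (dpartial js h y) \<le> Kh js) \<Longrightarrow>
       (\<And>x. r \<le> norm x \<Longrightarrow> h x = 0) \<Longrightarrow> powr_bounded (\<lambda>\<epsilon>. T (\<lambda>x. h x * rescale \<epsilon> g x)) \<delta>"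
proof -
  obtain U and ta :: "('n \<Rightarrow> nat) \<Rightarrow> real^'n \<Rightarrow> complex" where
    U: "open U" "0 \<in> U" and fin: "finite {\<alpha>. \<exists>q\<in>U. ta \<alpha> q \<noteq> 0}"
    and tz: "\<forall>\<alpha>. \<delta> + real (mabs \<alpha>) < 0 \<longrightarrow> (\<forall>q\<in>U. ta \<alpha> q = 0)"
    and tb: "\<forall>\<alpha>. \<exists>C. \<forall>q\<in>U. q \<noteq> 0 \<longrightarrow> norm (ta \<alpha> q) \<le> C * norm q powr (\<delta> + real (mabs \<alpha>))"
    and rep: "\<forall>\<phi>. smooth_fun \<phi> \<and> compact (tsupport \<phi>) \<and> tsupport \<phi> \<subseteq> U \<longrightarrow>
        T \<phi> = (\<Sum>\<alpha>\<in>{\<alpha>. \<exists>q\<in>U. ta \<alpha> q \<noteq> 0}. (-1) ^ mabs \<alpha> * fun_dist (ta \<alpha>) (mpartial \<alpha> \<phi>))"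
    using O unfolding Odist_def by blast
  define F where "F = {\<alpha>. \<exists>q\<in>U. ta \<alpha> q \<noteq> 0}"
  obtain C where C: "\<And>\<alpha> q. q \<in> U \<Longrightarrow> q \<noteq> 0 \<Longrightarrow> norm (ta \<alpha> q) \<le> C \<alpha> * norm q powr (\<delta> + real (mabs \<alpha>))"
    using tb by metis
  obtain r where r: "0 < r" "cball 0 r \<subseteq> U" using U open_contains_cball by blast
  show thesis
  proof (rule that[OF r(1)])
    fix h :: "real^'n \<Rightarrow> complex" and Kh
    assume h: "smooth_fun h" "\<And>js y. norm (dpartial js h y) \<le> Kh js" "\<And>x. r \<le> norm x \<Longrightarrow> h x = 0"
    let ?\<phi> = "\<lambda>\<epsilon> x. h x * rescale \<epsilon> g x"
    have "T (?\<phi> \<epsilon>) = (\<Sum>\<alpha>\<in>F. (-1) ^ mabs \<alpha> * fun_dist (ta \<alpha>) (mpartial \<alpha> (?\<phi> \<epsilon>)))" for \<epsilon>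
    proof -
      have supp: "tsupport (?\<phi> \<epsilon>) \<subseteq> cball 0 r" "compact (tsupport (?\<phi> \<epsilon>))"
        using tsupport_subset_cball[of r "?\<phi> \<epsilon>"] h(3) by simp_all
      moreover have "smooth_fun (?\<phi> \<epsilon>)"
        by (intro smooth_fun_mult h(1) smooth_fun_rescale schwartz_smooth_fun g)
      moreover have "tsupport (?\<phi> \<epsilon>) \<subseteq> U" using supp(1) r(2) by (rule order_trans)
      ultimately show ?thesis using rep unfolding F_def by simp
    qed
    then have T_eq: "(\<lambda>\<epsilon>. T (?\<phi> \<epsilon>)) =
        (\<lambda>\<epsilon>. \<Sum>\<alpha>\<in>F. (-1) ^ mabs \<alpha> * fun_dist (ta \<alpha>) (mpartial \<alpha> (?\<phi> \<epsilon>)))"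
      by (intro ext)
    have "powr_bounded (\<lambda>\<epsilon>. (-1) ^ mabs \<alpha> * fun_dist (ta \<alpha>) (mpartial \<alpha> (?\<phi> \<epsilon>))) \<delta>" for \<alpha>
    proof (rule powr_bounded_mono[where C="norm (normc TYPE('n))"])
      have "q \<in> U" if "norm q \<le> r" for q using that r(2) by auto
      then show "powr_bounded (\<lambda>\<epsilon>. LINT q|lborel. ta \<alpha> q * dpartial (mlist \<alpha>) (?\<phi> \<epsilon>) q) \<delta>"
        using C tz by (intro near_part_integral_bound[OF h _ _ g, where C="C \<alpha>"]) (auto simp: length_mlist)
    qed (simp_all add: fun_dist_def mpartial_def norm_mult norm_power)
    then show "powr_bounded (\<lambda>\<epsilon>. T (?\<phi> \<epsilon>)) \<delta>"
      unfolding T_eq using fin F_def by (intro powr_bounded_sum) auto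
  qed
qed

lemma powr_bounded_rescale:
  fixes T :: "(real^'n::finite \<Rightarrow> complex) \<Rightarrow> complex"
  assumes T: "tempered T" and O: "Odist T \<delta>" and g: "schwartz g"
  shows "powr_bounded (\<lambda>\<epsilon>. T (rescale \<epsilon> g)) \<delta>"
proof -
  obtain r where r: "0 < r" and near: "\<And>h Kh. smooth_fun h \<Longrightarrow> (\<And>js y. norm (dpartial js h y) \<le> Kh js) \<Longrightarrow>
       (\<And>x. r \<le> norm x \<Longrightarrow> h x = 0) \<Longrightarrow> powr_bounded (\<lambda>\<epsilon>. T (\<lambda>x. h x * rescale \<epsilon> g x)) \<delta>"
    using Odist_cutoff_bound[OF O g] by blast
  obtain cf :: "real^'n \<Rightarrow> complex" and K where cf: "smooth_fun cf" "\<And>x. norm x < r / 2 \<Longrightarrow> cf x = 1"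
      "\<And>x. r \<le> norm x \<Longrightarrow> cf x = 0" "\<And>is x. norm (dpartial is cf x) \<le> K is"
    using smooth_bump_exists[of "r / 2" r] r by auto
  define h where "h = (\<lambda>x. 1 - cf x)"
  have h: "smooth_fun h" "\<And>x. norm x < r / 2 \<Longrightarrow> h x = 0"
    using cf by (auto simp: h_def intro: smooth_fun_diff smooth_fun_const)
  have h_bound: "norm (dpartial is h x) \<le> 1 + K is" for "is" x
    unfolding h_def using norm_dpartial_one_minus_le[OF cf(1)] cf(4) by (meson add_left_mono order_trans)
  obtain C m where C: "0 \<le> C" "\<And>f. schwartz f \<Longrightarrow> norm (T f) \<le> C * schwartz_seminorm m f"
    using tempered_bound[OF T] by blast
  have far: "powr_bounded (\<lambda>\<epsilon>. T (\<lambda>x. h x * rescale \<epsilon> g x)) \<delta>"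
  proof (rule powr_bounded_mono[OF far_part_seminorm_bound[where \<rho>="r / 2", OF h(1) h_bound h(2)] _ C(1)])
    fix \<epsilon> :: real assume "0 < \<epsilon>" "\<epsilon> \<le> 1"
    then have "schwartz (\<lambda>x. h x * rescale \<epsilon> g x)"
      by (intro schwartz_mult[OF h(1) h_bound] schwartz_rescale[OF g])
    then have "norm (T (\<lambda>x. h x * rescale \<epsilon> g x)) \<le> C * schwartz_seminorm m (\<lambda>x. h x * rescale \<epsilon> g x)"
      by (rule C(2))
    also have "\<dots> \<le> C * norm (schwartz_seminorm m (\<lambda>x. h x * rescale \<epsilon> g x))"
      by (intro mult_left_mono C(1)) simp
    finally show "norm (T (\<lambda>x. h x * rescale \<epsilon> g x)) \<le> C * norm (schwartz_seminorm m (\<lambda>x. h x * rescale \<epsilon> g x))" .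
  qed (use r g in auto)
  have "T (rescale \<epsilon> g) = T (\<lambda>x. cf x * rescale \<epsilon> g x) + T (\<lambda>x. h x * rescale \<epsilon> g x)" if "0 < \<epsilon>" for \<epsilon>
  proof -
    have "(\<lambda>x. cf x * rescale \<epsilon> g x + h x * rescale \<epsilon> g x) = rescale \<epsilon> g"
      by (auto simp: h_def algebra_simps)
    then show ?thesis
      using tempered_add[OF T schwartz_mult[OF cf(1,4) schwartz_rescale[OF g that]]
          schwartz_mult[OF h(1) h_bound schwartz_rescale[OF g that]]] by simp
  qed
  then show ?thesis
    by (intro powr_bounded_mono[OF powr_bounded_add[OF near[OF cf(1,4,3)] far], of _ 1]) auto
qed

lemma fun_dist_one_rescale:
  assumes "0 < \<epsilon>"
  shows "fun_dist (\<lambda>_. 1) (rescale \<epsilon> g) = fun_dist (\<lambda>_. 1) (g :: real^'n::finite \<Rightarrow> complex)"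
proof -
  have "(LINT q|lborel. g q) = \<bar>inverse \<epsilon>\<bar> ^ DIM(real^'n) *\<^sub>R (LINT q|lborel. g (inverse \<epsilon> *\<^sub>R q))"
    by (rule integral_lborel_scaleR) (use assms in simp)
  then show ?thesis
    using assms by (simp add: fun_dist_def rescale_def scaleR_conv_of_real)
qed

lemma has_value_at_zero_if_Odist:
  fixes T :: "(real^'n::finite \<Rightarrow> complex) \<Rightarrow> complex"
  assumes T: "tempered T" and \<delta>: "0 < \<delta>" and O: "Odist (\<lambda>\<phi>. T \<phi> - c * fun_dist (\<lambda>_. 1) \<phi>) \<delta>"
  shows "has_value_at_zero T c"
  unfolding has_value_at_zero_def
proof (intro allI impI)
  fix g :: "real^'n \<Rightarrow> complex" assume g: "schwartz g \<and> fun_dist (\<lambda>_. 1) g = 1"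
  let ?T' = "\<lambda>\<phi>. T \<phi> - c * fun_dist (\<lambda>_. 1) \<phi>"
  have "((\<lambda>\<epsilon>. ?T' (rescale \<epsilon> g)) \<longlongrightarrow> 0) (at_right 0)"
    by (intro powr_bounded_tendsto_0[OF powr_bounded_rescale \<delta>] tempered_diff_cmult T
        tempered_fun_dist_one O) (use g in blast)
  then have "((\<lambda>\<epsilon>. ?T' (rescale \<epsilon> g) + c) \<longlongrightarrow> c) (at_right 0)"
    using tendsto_add[OF _ tendsto_const, of _ 0 _ c] by simp
  moreover have "\<forall>\<^sub>F \<epsilon> in at_right 0. ?T' (rescale \<epsilon> g) + c = T (rescale \<epsilon> g)"
    using eventually_at_right_0_le_1 by eventually_elim (use g in \<open>simp add: fun_dist_one_rescale\<close>)
  ultimately show "((\<lambda>\<epsilon>. T (rescale \<epsilon> g)) \<longlongrightarrow> c) (at_right 0)"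
    by (rule Lim_transform_eventually)
qed

lemma zero_of_order_if_Odist:
  fixes T :: "(real^'n::finite \<Rightarrow> complex) \<Rightarrow> complex"
  assumes T: "tempered T" and \<omega>: "\<delta> + 1 > real \<omega>" and O: "Odist T \<delta>"
  shows "zero_of_order T \<omega>"
  unfolding zero_of_order_def has_value_at_zero_def
proof (intro allI impI)
  fix \<gamma> :: "'n \<Rightarrow> nat" and g :: "real^'n \<Rightarrow> complex"
  assume \<gamma>: "mabs \<gamma> < \<omega>" and g: "schwartz g \<and> fun_dist (\<lambda>_. 1) g = 1"
  let ?m = "mabs \<gamma>" and ?g' = "mpartial \<gamma> g"
  have g': "schwartz ?g'" unfolding mpartial_def using g by (intro schwartz_dpartial) auto
  have eq: "dist_deriv \<gamma> T (rescale \<epsilon> g) = (-1) ^ ?m * (of_real (inverse \<epsilon>) ^ ?m * T (rescale \<epsilon> ?g'))"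
    if "0 < \<epsilon>" for \<epsilon>
  proof -
    have "mpartial \<gamma> (rescale \<epsilon> g) = (\<lambda>q. of_real (inverse \<epsilon>) ^ ?m * rescale \<epsilon> ?g' q)"
      using g unfolding mpartial_def by (simp add: dpartial_rescale schwartz_smooth_fun length_mlist)
    then show ?thesis
      by (simp add: dist_deriv_def tempered_cmult[OF T schwartz_rescale[OF g' that]])
  qed
  have "((\<lambda>\<epsilon>. (-1) ^ ?m * (of_real (inverse \<epsilon>) ^ ?m * T (rescale \<epsilon> ?g'))) \<longlongrightarrow> 0) (at_right 0)"
    using \<gamma> \<omega> by (intro tendsto_mult_right_zero powr_bounded_tendsto_0[OF
        powr_bounded_mult_inverse_power[OF powr_bounded_rescale[OF T O g']]]) auto
  then show "((\<lambda>\<epsilon>. dist_deriv \<gamma> T (rescale \<epsilon> g)) \<longlongrightarrow> 0) (at_right 0)"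
    by (rule Lim_transform_eventually[OF _ eventually_mono[OF eventually_at_right_0_le_1]]) (simp add: eq)
qed

theorem theorem3p5:
  fixes dummy :: "'n::finite itself"
  shows "(\<forall>(T :: (real^'n \<Rightarrow> complex) \<Rightarrow> complex) \<delta>. tempered T \<and> Odist T \<delta> \<longrightarrow>
            (\<forall>g. schwartz g \<longrightarrow>
               (\<lambda>\<epsilon>. T (rescale \<epsilon> g)) \<in> O[at_right 0](\<lambda>\<epsilon>. complex_of_real (\<epsilon> powr \<delta>)))) \<and>
         (\<forall>(T :: (real^'n \<Rightarrow> complex) \<Rightarrow> complex) \<delta> c. tempered T \<and> \<delta> > 0 \<and>
             Odist (\<lambda>\<phi>. T \<phi> - c * fun_dist (\<lambda>_. 1) \<phi>) \<delta> \<longrightarrow> has_value_at_zero T c) \<and>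
         (\<forall>(T :: (real^'n \<Rightarrow> complex) \<Rightarrow> complex) \<delta> (\<omega>::nat). tempered T \<and> \<omega> \<ge> 1 \<and>
             \<delta> + 1 > real \<omega> \<and> Odist T \<delta> \<longrightarrow> zero_of_order T \<omega>)"
proof (intro conjI allI impI)
  fix T :: "(real^'n \<Rightarrow> complex) \<Rightarrow> complex" and \<delta> :: real and g :: "real^'n \<Rightarrow> complex"
  assume "tempered T \<and> Odist T \<delta>" "schwartz g"
  then show "(\<lambda>\<epsilon>. T (rescale \<epsilon> g)) \<in> O[at_right 0](\<lambda>\<epsilon>. complex_of_real (\<epsilon> powr \<delta>))"
    by (intro powr_bounded_imp_bigo powr_bounded_rescale) auto
next
  fix T :: "(real^'n \<Rightarrow> complex) \<Rightarrow> complex" and \<delta> :: real and c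
  assume "tempered T \<and> 0 < \<delta> \<and> Odist (\<lambda>\<phi>. T \<phi> - c * fun_dist (\<lambda>_. 1) \<phi>) \<delta>"
  then show "has_value_at_zero T c" by (intro has_value_at_zero_if_Odist) auto
next
  fix T :: "(real^'n \<Rightarrow> complex) \<Rightarrow> complex" and \<delta> :: real and \<omega> :: nat
  assume "tempered T \<and> 1 \<le> \<omega> \<and> real \<omega> < \<delta> + 1 \<and> Odist T \<delta>"
  then show "zero_of_order T \<omega>" by (intro zero_of_order_if_Odist) auto
qed

end
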